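(* Let $V$ be an integrable $U_{q,\pi}(\mathfrak{sl}_2)$-module. There is a $\mathbb Q(q)^\pi$-linear automorphism $T:V\to V$ sending $1_{-k}V$ onto $1_kV$ for every $k\in\mathbb Z$, given on $v\in 1_{-k}V$ by $$T(v)=\sum_{d\ge\max(0,-k)}(-q)^dE^{(k+d)}F^{(d)}v,$$ whose inverse is given on $v\in 1_kV$ by $$T^{-1}(v)=\sum_{d\ge\max(0,-k)}(-q)^{-d}\,\overline F^{(k+d)}\,\overline E^{(d)}v.$$
   Context: $\mathbb Q(q)^\pi:=\mathbb Q(q)[\pi]/(\pi^2-1)$; $[n]_{q,\pi}:=\frac{(\pi q)^n-q^{-n}}{\pi q-q^{-1}}$, $[d]^!_{q,\pi}:=[d]_{q,\pi}\cdots[1]_{q,\pi}$. The bar involution is the $\mathbb Q^\pi$-algebra involution $c\mapsto\overline c$ of $\mathbb Q(q)^\pi$ with $\overline q=q^{-1}$, $\overline\pi=\pi$. $U_{q,\pi}(\mathfrak{sl}_2)$ is the locally unital $\mathbb Q(q)^\pi$-algebra with mutually orthogonal idempotents $1_k$ ($k\in\mathbb Z$) and generators $E1_k=1_{k+2}E$, $F1_k=1_{k-2}F$ subject to $EF1_k-\pi FE1_k=\overline{[k]_{q,\pi}}\,1_k$ for all $k$. Divided powers: $E^{(d)}1_k:=E^d1_k/[d]^!_{q,\pi}$, $F^{(d)}1_k:=F^d1_k/[d]^!_{q,\pi}$, $\overline E^{(d)}1_k:=E^d1_k/\overline{[d]^!_{q,\pi}}$, $\overline F^{(d)}1_k:=F^d1_k/\overline{[d]^!_{q,\pi}}$.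 A module is a locally unital left module $V=\bigoplus_k1_kV$; it is integrable if every $v\in 1_kV$ is annihilated by $E^n1_k$ and $F^n1_k$ for $n\gg0$. *)

theory Defs
  imports Main "HOL-Computational_Algebra.Polynomial" "HOL-Computational_Algebra.Fraction_Field"
begin

type_synonym Qq = "rat poly fract"

definition qQ :: Qq where "qQ = Fract [:0, 1:] 1"

definition subinv :: "rat poly \<Rightarrow> Qq" where
  "subinv p = poly (map_poly (\<lambda>c. Fract [:c:] 1) p) (inverse qQ)"

text \<open>Bar involution on Q(q): q maps to q^{-1} (Q-linear, field automorphism).\<close>
definition barQ :: "Qq \<Rightarrow> Qq" where
  "barQ x = (SOME y. \<exists>a b. b \<noteq> 0 \<and> x = Fract a b \<and> y = subinv a / subinv b)"

section \<open>The ring Q(q)^pi = Q(q)[pi]/(pi^2 - 1); QP a b stands for a + b pi\<close>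

datatype qpi = QP Qq Qq

fun qfst :: "qpi \<Rightarrow> Qq" where "qfst (QP a b) = a"
fun qsnd :: "qpi \<Rightarrow> Qq" where "qsnd (QP a b) = b"

instantiation qpi :: comm_ring_1
begin
definition "0 = QP 0 0"
definition "1 = QP 1 0"
definition "x + y = QP (qfst x + qfst y) (qsnd x + qsnd y)"
definition "- x = QP (- qfst x) (- qsnd x)"
definition "x - y = QP (qfst x - qfst y) (qsnd x - qsnd y)"
definition "x * y = QP (qfst x * qfst y + qsnd x * qsnd y) (qfst x * qsnd y + qsnd x * qfst y)"
instance
proof
  fix a b c :: qpi
  show "a * b * c = a * (b * c)"
    by (cases a; cases b; cases c) (simp add: times_qpi_def algebra_simps)
  show "a * b = b * a"
    by (cases a; cases b) (simp add: times_qpi_def algebra_simps)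
  show "1 * a = a"
    by (cases a) (simp add: times_qpi_def one_qpi_def)
  show "a + b + c = a + (b + c)"
    by (cases a; cases b; cases c) (simp add: plus_qpi_def algebra_simps)
  show "a + b = b + a"
    by (cases a; cases b) (simp add: plus_qpi_def algebra_simps)
  show "0 + a = a"
    by (cases a) (simp add: plus_qpi_def zero_qpi_def)
  show "- a + a = 0"
    by (cases a) (simp add: plus_qpi_def uminus_qpi_def zero_qpi_def)
  show "a - b = a + - b"
    by (cases a; cases b) (simp add: plus_qpi_def uminus_qpi_def minus_qpi_def)
  show "(a + b) * c = a * c + b * c"
    by (cases a; cases b; cases c) (simp add: plus_qpi_def times_qpi_def algebra_simps)
  show "(0::qpi) \<noteq> 1"
    by (simp add: zero_qpi_def one_qpi_def)
qed
end

definition qv :: qpi where "qv = QP qQ 0"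
definition piv :: qpi where "piv = QP 0 1"

text \<open>Inverse in Q(q)^pi (a + b pi is invertible iff a^2 \<noteq> b^2); 0 otherwise.\<close>
definition qinv :: "qpi \<Rightarrow> qpi" where
  "qinv x = QP (qfst x / (qfst x ^ 2 - qsnd x ^ 2)) (- qsnd x / (qfst x ^ 2 - qsnd x ^ 2))"

definition qpow :: "qpi \<Rightarrow> int \<Rightarrow> qpi" where
  "qpow x n = (if n \<ge> 0 then x ^ nat n else qinv x ^ nat (- n))"

definition qbar :: "qpi \<Rightarrow> qpi" where
  "qbar x = QP (barQ (qfst x)) (barQ (qsnd x))"

definition qint :: "int \<Rightarrow> qpi" where
  "qint n = (qpow (piv * qv) n - qpow qv (- n)) * qinv (piv * qv - qpow qv (-1))"

definition qfact :: "nat \<Rightarrow> qpi" where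
  "qfact d = (\<Prod>i\<in>{1..d}. qint (int i))"

text \<open>A locally unital U_{q,pi}(sl_2)-module V = (+)_k 1_k V: scal is the Q(q)^pi-action,
  P k is the action of the idempotent 1_k, E and F the actions of E and F (i.e. sum_k E1_k, sum_k F1_k).\<close>
definition qlinear :: "(qpi \<Rightarrow> 'v::ab_group_add \<Rightarrow> 'v) \<Rightarrow> ('v \<Rightarrow> 'v) \<Rightarrow> bool" where
  "qlinear scal f \<longleftrightarrow> (\<forall>x y. f (x + y) = f x + f y) \<and> (\<forall>c x. f (scal c x) = scal c (f x))"

definition Uqpi_module ::
  "(qpi \<Rightarrow> 'v::ab_group_add \<Rightarrow> 'v) \<Rightarrow> (int \<Rightarrow> 'v \<Rightarrow> 'v) \<Rightarrow> ('v \<Rightarrow> 'v) \<Rightarrow> ('v \<Rightarrow> 'v) \<Rightarrow> bool" where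
  "Uqpi_module scal P E F \<longleftrightarrow>
     module scal \<and>
     (\<forall>k. qlinear scal (P k)) \<and> qlinear scal E \<and> qlinear scal F \<and>
     (\<forall>k l v. P k (P l v) = (if k = l then P k v else 0)) \<and>
     (\<forall>v. finite {k. P k v \<noteq> 0} \<and> v = (\<Sum>k\<in>{k. P k v \<noteq> 0}. P k v)) \<and>
     (\<forall>k v. E (P k v) = P (k + 2) (E v)) \<and>
     (\<forall>k v. F (P k v) = P (k - 2) (F v)) \<and>
     (\<forall>k v. E (F (P k v)) - scal piv (F (E (P k v))) = scal (qbar (qint k)) (P k v))"

definition integrable ::
  "(qpi \<Rightarrow> 'v::ab_group_add \<Rightarrow> 'v) \<Rightarrow> (int \<Rightarrow> 'v \<Rightarrow> 'v) \<Rightarrow> ('v \<Rightarrow> 'v) \<Rightarrow> ('v \<Rightarrow> 'v) \<Rightarrow> bool" where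
  "integrable scal P E F \<longleftrightarrow> Uqpi_module scal P E F \<and>
     (\<forall>k v. v \<in> range (P k) \<longrightarrow> (\<exists>n. \<forall>m\<ge>n. (E ^^ m) v = 0 \<and> (F ^^ m) v = 0))"

definition divpow :: "(qpi \<Rightarrow> 'v \<Rightarrow> 'v) \<Rightarrow> ('v \<Rightarrow> 'v) \<Rightarrow> nat \<Rightarrow> 'v \<Rightarrow> 'v" where
  "divpow scal X d v = scal (qinv (qfact d)) ((X ^^ d) v)"

definition divpow_bar :: "(qpi \<Rightarrow> 'v \<Rightarrow> 'v) \<Rightarrow> ('v \<Rightarrow> 'v) \<Rightarrow> nat \<Rightarrow> 'v \<Rightarrow> 'v" where
  "divpow_bar scal X d v = scal (qinv (qbar (qfact d))) ((X ^^ d) v)"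

definition fsum :: "(nat \<Rightarrow> 'v::comm_monoid_add) \<Rightarrow> nat set \<Rightarrow> 'v" where
  "fsum f A = (\<Sum>d\<in>{d\<in>A. f d \<noteq> 0}. f d)"

end

theory Submission
  imports Defs "HOL-Computational_Algebra.Formal_Power_Series"
begin

text \<open>Every weight vector of an integrable module is a finite sum of strings $F^j x$ with $E x = 0$
  (or of strings $E^j y$ with $F y = 0$, which are again strings of the first kind).  If $x$ has
  weight $n$, the commutation relation gives $E F^i x = [i]\,\overline{[n-i+1]}\,F^{i-1} x$, so for
  $n = j + m$ both $T$ and the candidate inverse $T'$ exchange $F^{(j)} x$ and $F^{(m)} x$ up to
  scalars.  After specialising $\pi$ to $\pm 1$, the product of the two scalars is a $q$-Vandermonde
  convolution, which equals $1$: it is a coefficient of a Cauchy binomial product times the inverse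
  of another one.  Hence $T' T = T T' = 1$ on every weight vector, and so everywhere.\<close>

section \<open>The bar involution on $\mathbb Q(q)$\<close>

definition poly_fract :: "rat poly \<Rightarrow> Qq" where "poly_fract p = Fract p 1"

lemma poly_fract_add: "poly_fract (p + r) = poly_fract p + poly_fract r"
  by (simp add: poly_fract_def)
lemma poly_fract_mult: "poly_fract (p * r) = poly_fract p * poly_fract r"
  by (simp add: poly_fract_def)
lemma poly_fract_0: "poly_fract 0 = 0"
  by (simp add: poly_fract_def Zero_fract_def)
lemma poly_fract_1: "poly_fract 1 = 1"
  by (simp add: poly_fract_def One_fract_def)
lemma poly_fract_eq_iff: "poly_fract p = poly_fract r \<longleftrightarrow> p = r"
  by (simp add: poly_fract_def eq_fract)
lemma poly_fract_eq_0_iff: "poly_fract p = 0 \<longleftrightarrow> p = 0"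
  using poly_fract_eq_iff[of p 0] by (simp add: poly_fract_0)
lemma poly_fract_power: "poly_fract (p ^ n) = poly_fract p ^ n"
  by (induct n) (simp_all add: poly_fract_1 poly_fract_mult)
lemma qQ_eq_poly_fract: "qQ = poly_fract [:0, 1:]"
  by (simp add: qQ_def poly_fract_def)
lemma qQ_nonzero: "qQ \<noteq> 0"
  by (simp add: qQ_eq_poly_fract poly_fract_eq_0_iff)

lemma subinv_pCons: "subinv (pCons c p) = poly_fract [:c:] + inverse qQ * subinv p"
  by (simp add: subinv_def map_poly_pCons poly_fract_def Zero_fract_def eq_fract)

lemma subinv_0: "subinv 0 = 0"
  by (simp add: subinv_def)

lemma subinv_const: "subinv [:c:] = poly_fract [:c:]"
  using subinv_pCons[of c 0] by (simp add: subinv_0)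

lemma subinv_1: "subinv 1 = 1"
  using subinv_const[of 1] by (simp add: poly_fract_1 flip: one_pCons)

lemma subinv_add: "subinv (p + r) = subinv p + subinv r"
proof (induct p arbitrary: r rule: pCons_induct)
  case (pCons a p)
  show ?case
  proof (cases r rule: pCons_cases)
    case (pCons b r')
    then show ?thesis using pCons.hyps(2)[of r']
      by (simp add: subinv_pCons poly_fract_add[symmetric] algebra_simps)
  qed
qed (simp add: subinv_0)

lemma subinv_smult: "subinv (smult c p) = poly_fract [:c:] * subinv p"
  by (induct p rule: pCons_induct)
    (simp_all add: subinv_0 subinv_pCons poly_fract_mult[symmetric] algebra_simps)

lemma subinv_mult: "subinv (p * r) = subinv p * subinv r"
  by (induct p rule: pCons_induct)
    (simp_all add: subinv_0 subinv_pCons subinv_add subinv_smult poly_fract_0 algebra_simps)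

lemma poly_fract_monom: "poly_fract (monom c n) = poly_fract [:c:] * qQ ^ n"
proof -
  have "monom c n = [:c:] * [:0, 1:] ^ n"
    by (simp add: monom_altdef)
  then show ?thesis
    by (simp only: qQ_eq_poly_fract poly_fract_mult poly_fract_power)
qed

lemma subinv_reflect_poly: "qQ ^ degree p * subinv p = poly_fract (reflect_poly p)"
proof (induct p rule: pCons_induct)
  case (pCons c p)
  show ?case
  proof (cases "p = 0")
    case False
    then show ?thesis using pCons.hyps(2) qQ_nonzero
      by (simp add: subinv_pCons reflect_poly_pCons' poly_fract_add poly_fract_monom algebra_simps)
        (simp add: field_simps)
  qed (simp add: subinv_const)
qed (simp add: subinv_0 poly_fract_0)

lemma subinv_eq_0_iff: "subinv p = 0 \<longleftrightarrow> p = 0"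
  using subinv_reflect_poly[of p] qQ_nonzero by (auto simp: poly_fract_eq_0_iff subinv_0)

lemma barQ_Fract:
  assumes "b \<noteq> 0"
  shows "barQ (Fract a b) = subinv a / subinv b"
proof -
  let ?P = "\<lambda>y. \<exists>a' b'. b' \<noteq> 0 \<and> Fract a b = Fract a' b' \<and> y = subinv a' / subinv b'"
  have "?P (subinv a / subinv b)"
    using assms by blast
  then have "?P (barQ (Fract a b))"
    unfolding barQ_def by (rule someI)
  then obtain a' b' where b': "b' \<noteq> 0" and "Fract a b = Fract a' b'"
    and bar: "barQ (Fract a b) = subinv a' / subinv b'"
    by blast
  then have "subinv a * subinv b' = subinv a' * subinv b"
    using assms by (simp add: eq_fract subinv_mult[symmetric])
  moreover have "subinv b \<noteq> 0" "subinv b' \<noteq> 0"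
    using assms b' by (simp_all add: subinv_eq_0_iff)
  ultimately show ?thesis
    using bar by (simp add: frac_eq_eq)
qed

lemma barQ_add: "barQ (x + y) = barQ x + barQ y"
proof (cases x; cases y)
  fix a b c d :: "rat poly"
  assume x: "x = Fract a b" "b \<noteq> 0" and y: "y = Fract c d" "d \<noteq> 0"
  then have "subinv b \<noteq> 0" "subinv d \<noteq> 0"
    by (simp_all add: subinv_eq_0_iff)
  then show ?thesis
    using x y by (simp add: barQ_Fract subinv_add subinv_mult field_simps)
qed

lemma barQ_mult: "barQ (x * y) = barQ x * barQ y"
proof (cases x; cases y)
  fix a b c d :: "rat poly"
  assume x: "x = Fract a b" "b \<noteq> 0" and y: "y = Fract c d" "d \<noteq> 0"
  then have "subinv b \<noteq> 0" "subinv d \<noteq> 0"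
    by (simp_all add: subinv_eq_0_iff)
  then show ?thesis
    using x y by (simp add: barQ_Fract subinv_mult)
qed

lemma barQ_0: "barQ 0 = 0"
proof -
  have "barQ (Fract 0 1) = 0"
    by (simp add: barQ_Fract subinv_0)
  then show ?thesis
    by (simp add: Zero_fract_def)
qed

lemma barQ_1: "barQ 1 = 1"
  by (simp add: One_fract_def barQ_Fract subinv_1)

lemma barQ_inverse: "barQ (inverse x) = inverse (barQ x)"
proof (cases x)
  fix a b :: "rat poly"
  assume x: "x = Fract a b" "b \<noteq> 0"
  show ?thesis
  proof (cases "a = 0")
    case True
    then have "x = 0"
      using x by (simp add: Zero_fract_def eq_fract)
    then show ?thesis
      by (simp add: barQ_0)
  qed (use x in \<open>simp add: barQ_Fract\<close>)
qed

lemma barQ_qQ: "barQ qQ = inverse qQ"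
proof -
  have "subinv [:0, 1:] = inverse qQ"
    using subinv_pCons[of 0 "[:1:]"]
    by (simp add: subinv_const poly_fract_def flip: Zero_fract_def) (simp add: One_fract_def one_pCons)
  then show ?thesis
    by (simp add: qQ_def barQ_Fract subinv_1)
qed

lemma barQ_minus: "barQ (- x) = - barQ x"
  using barQ_add[of x "- x"] by (simp add: barQ_0 eq_neg_iff_add_eq_0)
lemma barQ_diff: "barQ (x - y) = barQ x - barQ y"
  using barQ_add[of x "- y"] by (simp add: barQ_minus)
lemma barQ_divide: "barQ (x / y) = barQ x / barQ y"
  by (simp add: divide_inverse barQ_mult barQ_inverse)
lemma barQ_power: "barQ (x ^ n) = barQ x ^ n"
  by (induct n) (simp_all add: barQ_1 barQ_mult)
lemma barQ_power_int: "barQ (x powi n) = barQ x powi n"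
  by (simp add: power_int_def barQ_power barQ_inverse)
lemma barQ_prod: "barQ (prod f A) = (\<Prod>a\<in>A. barQ (f a))"
  by (induct A rule: infinite_finite_induct) (simp_all add: barQ_1 barQ_mult)

section \<open>$\mathbb Q(q)^\pi$ through its specialisations $\pi = \pm 1$\<close>

text \<open>Since $\pi^2 = 1$, the ring $\mathbb Q(q)^\pi$ is the product of two copies of
  $\mathbb Q(q)$, obtained by specialising $\pi$ to $1$ and to $-1$; identities, units and
  inverses in $\mathbb Q(q)^\pi$ are checked componentwise.\<close>

definition pi_eval :: "Qq \<Rightarrow> qpi \<Rightarrow> Qq" where
  "pi_eval e x = qfst x + e * qsnd x"

definition is_sign :: "Qq \<Rightarrow> bool" where
  "is_sign e \<longleftrightarrow> e = 1 \<or> e = -1"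

lemma is_sign_square: "is_sign e \<Longrightarrow> e * e = 1"
  by (auto simp: is_sign_def)
lemma is_sign_nonzero: "is_sign e \<Longrightarrow> e \<noteq> 0"
  by (auto simp: is_sign_def)
lemma is_sign_power: "is_sign e \<Longrightarrow> is_sign (e ^ n)"
  by (induct n) (auto simp: is_sign_def)
lemma is_sign_power_int:
  assumes "is_sign e"
  shows "is_sign (e powi n)"
proof -
  have "is_sign (inverse e)"
    using assms by (auto simp: is_sign_def)
  then show ?thesis
    using assms by (simp add: power_int_def is_sign_power)
qed

lemma pi_eval_add: "pi_eval e (x + y) = pi_eval e x + pi_eval e y"
  by (simp add: pi_eval_def plus_qpi_def algebra_simps)
lemma pi_eval_diff: "pi_eval e (x - y) = pi_eval e x - pi_eval e y"
  by (simp add: pi_eval_def minus_qpi_def algebra_simps)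
lemma pi_eval_minus: "pi_eval e (- x) = - pi_eval e x"
  by (simp add: pi_eval_def uminus_qpi_def algebra_simps)
lemma pi_eval_0: "pi_eval e 0 = 0"
  by (simp add: pi_eval_def zero_qpi_def)
lemma pi_eval_1: "pi_eval e 1 = 1"
  by (simp add: pi_eval_def one_qpi_def)
lemma pi_eval_mult: "is_sign e \<Longrightarrow> pi_eval e (x * y) = pi_eval e x * pi_eval e y"
  by (auto simp: is_sign_def pi_eval_def times_qpi_def algebra_simps)
lemma pi_eval_power: "is_sign e \<Longrightarrow> pi_eval e (x ^ n) = pi_eval e x ^ n"
  by (induct n) (simp_all add: pi_eval_1 pi_eval_mult)
lemma pi_eval_sum: "pi_eval e (sum f A) = (\<Sum>a\<in>A. pi_eval e (f a))"
  by (induct A rule: infinite_finite_induct) (simp_all add: pi_eval_0 pi_eval_add)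
lemma pi_eval_prod: "is_sign e \<Longrightarrow> pi_eval e (prod f A) = (\<Prod>a\<in>A. pi_eval e (f a))"
  by (induct A rule: infinite_finite_induct) (simp_all add: pi_eval_1 pi_eval_mult)
lemma pi_eval_qv: "pi_eval e qv = qQ"
  by (simp add: pi_eval_def qv_def)
lemma pi_eval_piv: "pi_eval e piv = e"
  by (simp add: pi_eval_def piv_def)

lemma pi_eval_qbar: "is_sign e \<Longrightarrow> pi_eval e (qbar x) = barQ (pi_eval e x)"
  by (auto simp: is_sign_def pi_eval_def qbar_def barQ_add barQ_minus)

lemma qpi_eqI:
  assumes "pi_eval 1 x = pi_eval 1 y" and "pi_eval (-1) x = pi_eval (-1) y"
  shows "x = y"
proof -
  obtain a b c d where x: "x = QP a b" and y: "y = QP c d"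
    by (cases x; cases y)
  from assms have "a + b = c + d" "a - b = c - d"
    by (simp_all add: x y pi_eval_def)
  then have "a = c" "b = d"
    by (simp_all add: algebra_simps)
  then show ?thesis
    by (simp add: x y)
qed

lemma qpi_eqI_sign: "(\<And>e. is_sign e \<Longrightarrow> pi_eval e x = pi_eval e y) \<Longrightarrow> x = y"
  by (rule qpi_eqI) (simp_all add: is_sign_def)

definition qpi_unit :: "qpi \<Rightarrow> bool" where
  "qpi_unit x \<longleftrightarrow> pi_eval 1 x \<noteq> 0 \<and> pi_eval (-1) x \<noteq> 0"

lemma qpi_unit_iff: "qpi_unit x \<longleftrightarrow> (\<forall>e. is_sign e \<longrightarrow> pi_eval e x \<noteq> 0)"
  by (auto simp: qpi_unit_def is_sign_def)

lemma pi_eval_qinv: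
  assumes "qpi_unit x" and "is_sign e"
  shows "pi_eval e (qinv x) = inverse (pi_eval e x)"
proof -
  obtain a b where x: "x = QP a b"
    by (cases x)
  have nonzero: "a + b \<noteq> 0" "a - b \<noteq> 0"
    using assms(1) by (auto simp: qpi_unit_def pi_eval_def x)
  define D where "D = a\<^sup>2 - b\<^sup>2"
  have D: "D = (a + b) * (a - b)"
    by (simp add: D_def algebra_simps power2_eq_square)
  have qinv_eval: "pi_eval e (qinv x) = (a + e * (- b)) / D"
    by (simp add: pi_eval_def qinv_def x D_def diff_divide_distrib)
  have "(a + b) * (a - b) \<noteq> 0"
    using nonzero by simp
  then show ?thesis
    using assms(2) nonzero unfolding qinv_eval D by (auto simp: is_sign_def pi_eval_def x field_simps)
qed

lemma qpi_unit_mult: "qpi_unit x \<Longrightarrow> qpi_unit y \<Longrightarrow> qpi_unit (x * y)"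
  by (simp add: qpi_unit_iff pi_eval_mult)
lemma qpi_unit_prod: "(\<And>a. a \<in> A \<Longrightarrow> qpi_unit (f a)) \<Longrightarrow> qpi_unit (prod f A)"
proof (induct A rule: infinite_finite_induct)
  case (insert a A)
  then show ?case by (simp add: qpi_unit_mult)
qed (simp_all add: qpi_unit_def pi_eval_1)
lemma qpi_unit_power: "qpi_unit x \<Longrightarrow> qpi_unit (x ^ n)"
  using qpi_unit_prod[of "{..<n}" "\<lambda>_. x"] by simp
lemma qpi_unit_qinv: "qpi_unit x \<Longrightarrow> qpi_unit (qinv x)"
  by (simp add: qpi_unit_iff pi_eval_qinv)
lemma qpi_unit_minus: "qpi_unit x \<Longrightarrow> qpi_unit (- x)"
  by (simp add: qpi_unit_def pi_eval_minus)
lemma qpi_unit_piv: "qpi_unit piv"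
  by (simp add: qpi_unit_def pi_eval_piv)
lemma qpi_unit_qv: "qpi_unit qv"
  by (simp add: qpi_unit_def pi_eval_qv qQ_nonzero)

lemma qinv_right_inverse: "qpi_unit x \<Longrightarrow> x * qinv x = 1"
  by (rule qpi_eqI_sign) (simp add: pi_eval_mult pi_eval_qinv pi_eval_1 qpi_unit_iff)
lemma qinv_left_inverse: "qpi_unit x \<Longrightarrow> qinv x * x = 1"
  using qinv_right_inverse by (simp add: mult.commute)

lemma piv_square: "piv * piv = 1"
  by (simp add: piv_def times_qpi_def one_qpi_def)

lemma pi_eval_qpow: "qpi_unit x \<Longrightarrow> is_sign e \<Longrightarrow> pi_eval e (qpow x n) = pi_eval e x powi n"
  by (simp add: qpow_def power_int_def pi_eval_power pi_eval_qinv qpi_unit_qinv power_inverse)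

section \<open>Quantum integers\<close>

text \<open>\<open>qnum e qQ n\<close> is $[n]_{q,\pi}$ specialised at $\pi = e$, and its bar is
  \<open>qnum e (inverse qQ) n\<close>; all identities are proved for a generic parameter $Q$.\<close>

definition qnum :: "Qq \<Rightarrow> Qq \<Rightarrow> int \<Rightarrow> Qq" where
  "qnum e Q n = ((e * Q) powi n - Q powi (- n)) / (e * Q - inverse Q)"

definition generic :: "Qq \<Rightarrow> bool" where
  "generic Q \<longleftrightarrow> Q \<noteq> 0 \<and> (\<forall>N::nat. N > 0 \<longrightarrow> Q ^ N \<noteq> 1 \<and> Q ^ N \<noteq> -1)"

lemma qQ_power_neq:
  assumes "N > 0"
  shows "qQ ^ N \<noteq> 1" and "qQ ^ N \<noteq> -1"
proof -
  have "coeff (monom (1::rat) N) N = 1" "coeff (1::rat poly) N = 0" "coeff (-1::rat poly) N = 0"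
    using assms by (simp_all add: coeff_1)
  then have "monom (1::rat) N \<noteq> 1" "monom (1::rat) N \<noteq> -1"
    by force+
  moreover have "qQ ^ N = poly_fract (monom 1 N)"
    by (simp add: qQ_eq_poly_fract poly_fract_power monom_altdef)
  moreover have "poly_fract (-1) = -1"
    using poly_fract_add[of 1 "-1"] by (simp add: poly_fract_0 poly_fract_1 eq_neg_iff_add_eq_0)
  ultimately show "qQ ^ N \<noteq> 1" "qQ ^ N \<noteq> -1"
    by (metis poly_fract_1 poly_fract_eq_iff)+
qed

lemma generic_qQ: "generic qQ"
  using qQ_power_neq qQ_nonzero by (simp add: generic_def)

lemma generic_inverse: "generic Q \<Longrightarrow> generic (inverse Q)"
proof -
  have "inverse x = 1 \<longleftrightarrow> x = 1" "inverse x = -1 \<longleftrightarrow> x = -1" for x :: Qq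
    by (metis inverse_1 inverse_inverse_eq, metis inverse_minus_eq inverse_1 inverse_inverse_eq)
  then show "generic Q \<Longrightarrow> generic (inverse Q)"
    unfolding generic_def by (simp add: power_inverse)
qed

lemma qnum_denom_nonzero:
  assumes e: "is_sign e" and Q: "generic Q"
  shows "e * Q - inverse Q \<noteq> 0"
proof
  assume "e * Q - inverse Q = 0"
  then have "e * Q * Q = 1"
    using Q by (simp add: generic_def field_simps)
  then have "Q ^ 2 = e"
    using e by (auto simp: is_sign_def power2_eq_square algebra_simps)
  then show False
    using Q e by (auto simp: generic_def is_sign_def dest!: spec[of _ 2])
qed

lemma signed_power_neq_1:
  assumes e: "is_sign e" and Q: "generic Q" and m: "m > 0"
  shows "(e * Q) ^ m * Q ^ m \<noteq> 1"
proof
  assume "(e * Q) ^ m * Q ^ m = 1"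
  then have "e ^ m * Q ^ (2 * m) = 1"
    by (simp add: power_mult_distrib power_mult power2_eq_square mult_ac)
  then have "Q ^ (2 * m) = 1 \<or> Q ^ (2 * m) = -1"
    using is_sign_power[OF e, of m] by (auto simp: is_sign_def minus_equation_iff)
  moreover have "2 * m > 0"
    using m by simp
  ultimately show False
    using Q unfolding generic_def by blast
qed

lemma qnum_nonzero:
  assumes e: "is_sign e" and Q: "generic Q" and n: "n \<noteq> 0"
  shows "qnum e Q n \<noteq> 0"
proof
  assume "qnum e Q n = 0"
  then have eq: "(e * Q) powi n = Q powi (- n)"
    using qnum_denom_nonzero[OF e Q] by (simp add: qnum_def)
  have "Q \<noteq> 0" "e * Q \<noteq> 0"
    using Q e by (auto simp: generic_def is_sign_def)
  show False
  proof (cases "n > 0")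
    case True
    then have "(e * Q) ^ nat n * Q ^ nat n = 1"
      using eq \<open>Q \<noteq> 0\<close> by (simp add: power_int_def power_inverse field_simps)
    then show False
      using signed_power_neq_1[OF e Q, of "nat n"] True by simp
  next
    case False
    then have "(e * Q) ^ nat (- n) * Q ^ nat (- n) = 1"
      using eq n \<open>e * Q \<noteq> 0\<close>
      by (simp add: power_int_def power_inverse power_mult_distrib field_simps)
    then show False
      using signed_power_neq_1[OF e Q, of "nat (- n)"] False n by simp
  qed
qed

lemma inverse_param_quotient:
  fixes E X e Q :: Qq
  assumes EE: "E * E = 1" and ee: "e * e = 1" and X: "X \<noteq> 0" and Q: "Q \<noteq> 0"
    and d1: "e * Q - inverse Q \<noteq> 0" and d2: "e * inverse Q - Q \<noteq> 0"
  shows "(E * inverse X - X) / (e * inverse Q - Q) = E * e * ((E * X - inverse X) / (e * Q - inverse Q))"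
proof -
  have l: "(E * inverse X - X) / (e * inverse Q - Q) = Q * (E - X * X) / (X * (e - Q * Q))"
    using X Q d2 by (simp add: field_simps)
  have r: "(E * X - inverse X) / (e * Q - inverse Q) = Q * (E * X * X - 1) / (X * (e * Q * Q - 1))"
    using X Q d1 by (simp add: field_simps)
  have "E * e * (E * X * X - 1) * (e - Q * Q)
      = (E * E) * (e * e) * (X * X) - (E * E) * e * (X * X * Q * Q) - E * (e * e) + E * e * (Q * Q)"
    by algebra
  then have c: "E * e * (E * X * X - 1) * (e - Q * Q) = (E - X * X) * (e * Q * Q - 1)"
    unfolding EE ee by algebra
  have "e - Q * Q \<noteq> 0" "e * Q * Q - 1 \<noteq> 0"
    using d1 d2 Q by (auto simp: field_simps)
  then show ?thesis
    unfolding l r using X Q c by (simp add: divide_simps)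
qed

lemma qnum_inverse_param:
  assumes e: "is_sign e" and Q: "generic Q"
  shows "qnum e (inverse Q) n = e powi (n - 1) * qnum e Q n"
proof -
  have "Q \<noteq> 0"
    using Q by (simp add: generic_def)
  have "qnum e (inverse Q) n = (e powi n * inverse (Q powi n) - Q powi n) / (e * inverse Q - Q)"
    using \<open>Q \<noteq> 0\<close> by (simp add: qnum_def power_int_mult_distrib power_int_minus power_int_inverse)
  also have "\<dots> = e powi n * e * ((e powi n * Q powi n - inverse (Q powi n)) / (e * Q - inverse Q))"
    using qnum_denom_nonzero[OF e Q] qnum_denom_nonzero[OF e generic_inverse[OF Q]] \<open>Q \<noteq> 0\<close>
      is_sign_square[OF is_sign_power_int[OF e]] is_sign_square[OF e]
    by (intro inverse_param_quotient) simp_all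
  also have "\<dots> = e powi (n - 1) * qnum e Q n"
    using e \<open>Q \<noteq> 0\<close>
    by (auto simp: is_sign_def qnum_def power_int_mult_distrib power_int_minus power_int_diff)
  finally show ?thesis .
qed

lemma power_int_2_mult: "x powi (2 * m) = x powi m * x powi m" for x :: "'a::field"
  by (simp add: power_int_mult power2_eq_square power_int_mult_distrib)

lemma power_int_split_simps:
  fixes x :: "'a::field"
  assumes "x \<noteq> 0"
  shows "x powi (m + 1) = x powi m * x \<and> x powi (m - 1) = x powi m / x
    \<and> x powi (n - m) = x powi n / x powi m \<and> x powi (n - m + 1) = x powi n * x / x powi m
    \<and> x powi (n - 2 * m) = x powi n / (x powi m * x powi m) \<and> x powi (- m) = inverse (x powi m)
    \<and> x powi (n + m) = x powi n * x powi m \<and> x powi (n + 2 * m) = x powi n * (x powi m * x powi m)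
    \<and> x powi (n + m - 1) = x powi n * x powi m / x \<and> x powi (2 * m) = x powi m * x powi m
    \<and> x powi (n - 2 * m - 1) = x powi n / (x powi m * x powi m * x)"
  using assms by (auto simp add: power_int_add power_int_diff mult_ac power_int_mult
      power2_eq_square power_int_minus)

text \<open>The two scalar identities behind the action of $E$ on $F^m x$ and of $F$ on $E^m y$
  for extremal vectors $x$, $y$.\<close>

lemma qnum_raising_identity:
  assumes e: "is_sign e" and Q: "generic Q"
  shows "qnum e Q (m + 1) * (e powi (n - m - 1) * qnum e Q (n - m))
       = e * qnum e Q m * (e powi (n - m) * qnum e Q (n - m + 1))
         + e powi (n - 2 * m - 1) * qnum e Q (n - 2 * m)"
proof -
  have nonzero: "Q \<noteq> 0" "e \<noteq> 0"
    using Q is_sign_nonzero[OF e] by (simp_all add: generic_def)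
  have signs: "e * e = 1" "e powi m * e powi m = 1" "e powi n * e powi n = 1"
    using is_sign_square[OF e] is_sign_square[OF is_sign_power_int[OF e]] by simp_all
  show ?thesis
    unfolding qnum_def using nonzero qnum_denom_nonzero[OF e Q]
    apply (simp add: power_int_mult_distrib power_int_split_simps diff_diff_eq)
    apply (simp add: divide_simps)
    using signs
    apply algebra
    done
qed

lemma qnum_lowering_identity:
  assumes e: "is_sign e" and Q: "generic Q"
  shows "qnum e Q (m + 1) * (e powi (n + m - 1) * qnum e Q (n + m))
         - qnum e Q m * (e powi (n + m - 2) * qnum e Q (n + m - 1))
       = e powi m * (e powi (n + 2 * m - 1) * qnum e Q (n + 2 * m))"
proof -
  have nonzero: "Q \<noteq> 0" "e \<noteq> 0"
    using Q is_sign_nonzero[OF e] by (simp_all add: generic_def)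
  have signs: "e * e = 1" "e powi m * e powi m = 1" "e powi n * e powi n = 1"
    using is_sign_square[OF e] is_sign_square[OF is_sign_power_int[OF e]] by simp_all
  show ?thesis
    unfolding qnum_def using nonzero qnum_denom_nonzero[OF e Q]
    apply (simp add: power_int_mult_distrib power_int_add power_int_diff power_int_minus
        power_int_2_mult)
    apply (simp add: divide_simps)
    using signs
    apply algebra
    done
qed

definition qint_bar :: "int \<Rightarrow> qpi" where
  "qint_bar n = qbar (qint n)"

lemma qpi_unit_qint_denom: "qpi_unit (piv * qv - qpow qv (-1))"
proof -
  have "pi_eval e (piv * qv - qpow qv (-1)) = e * qQ - inverse qQ" if "is_sign e" for e
    using that by (simp add: pi_eval_diff pi_eval_mult pi_eval_piv pi_eval_qv pi_eval_qpow qpi_unit_qv)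
  then show ?thesis
    unfolding qpi_unit_iff using qnum_denom_nonzero[OF _ generic_qQ] by simp
qed

lemma pi_eval_qint: "is_sign e \<Longrightarrow> pi_eval e (qint n) = qnum e qQ n"
  by (simp add: qint_def qnum_def pi_eval_diff pi_eval_mult pi_eval_piv pi_eval_qv pi_eval_qpow
      qpi_unit_qv qpi_unit_piv qpi_unit_mult pi_eval_qinv qpi_unit_qint_denom divide_inverse)

lemma barQ_qnum: "is_sign e \<Longrightarrow> barQ (qnum e Q n) = qnum e (barQ Q) n"
  by (auto simp: is_sign_def qnum_def barQ_divide barQ_diff barQ_mult barQ_power_int barQ_inverse
      barQ_1 barQ_minus)

lemma pi_eval_qint_bar: "is_sign e \<Longrightarrow> pi_eval e (qint_bar n) = e powi (n - 1) * qnum e qQ n"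
  by (simp add: qint_bar_def pi_eval_qbar pi_eval_qint barQ_qnum barQ_qQ qnum_inverse_param generic_qQ)

lemma qpi_unit_qint: "n \<noteq> 0 \<Longrightarrow> qpi_unit (qint n)"
  by (simp add: qpi_unit_iff pi_eval_qint qnum_nonzero generic_qQ)

lemma qpi_unit_qint_bar: "n \<noteq> 0 \<Longrightarrow> qpi_unit (qint_bar n)"
  by (simp add: qpi_unit_iff pi_eval_qint_bar qnum_nonzero generic_qQ
      is_sign_nonzero is_sign_power_int)

lemma qint_1: "qint 1 = 1"
proof (rule qpi_eqI_sign)
  fix e
  assume e: "is_sign e"
  then have "e * qQ - inverse qQ \<noteq> 0"
    by (rule qnum_denom_nonzero[OF _ generic_qQ])
  then show "pi_eval e (qint 1) = pi_eval e 1"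
    using e by (simp add: pi_eval_qint pi_eval_1 qnum_def)
qed

lemma qpi_unit_qfact: "qpi_unit (qfact d)"
  unfolding qfact_def by (rule qpi_unit_prod) (simp add: qpi_unit_qint)

text \<open>For $x$ of weight $\mu$ with $E x = 0$ one has
  $E F^{m} x = $ \<open>raising_coeff \<mu> m\<close>$\,F^{m-1} x$, and for $y$ of weight $\mu$ with
  $F y = 0$ one has $F E^{m} y = $ \<open>lowering_coeff \<mu> m\<close>$\,E^{m-1} y$.\<close>

definition raising_coeff :: "int \<Rightarrow> nat \<Rightarrow> qpi" where
  "raising_coeff \<mu> m = qint (int m) * qint_bar (\<mu> - int m + 1)"

definition lowering_coeff :: "int \<Rightarrow> nat \<Rightarrow> qpi" where
  "lowering_coeff \<mu> m = - (piv ^ m) * qint (int m) * qint_bar (\<mu> + int m - 1)"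

lemma raising_coeff_1: "raising_coeff \<mu> 1 = qint_bar \<mu>"
  by (simp add: raising_coeff_def qint_1)

lemma lowering_coeff_1: "lowering_coeff \<mu> 1 = - piv * qint_bar \<mu>"
  by (simp add: lowering_coeff_def qint_1)

lemma raising_coeff_Suc:
  "piv * raising_coeff \<mu> (Suc m) + qint_bar (\<mu> - 2 * int (Suc m)) = raising_coeff \<mu> (Suc (Suc m))"
proof (rule qpi_eqI_sign)
  fix e :: Qq
  assume e: "is_sign e"
  have "qnum e qQ (int m + 1 + 1) * (e powi (\<mu> - (int m + 1) - 1) * qnum e qQ (\<mu> - (int m + 1)))
     = e * qnum e qQ (int m + 1) * (e powi (\<mu> - (int m + 1)) * qnum e qQ (\<mu> - (int m + 1) + 1))
       + e powi (\<mu> - 2 * (int m + 1) - 1) * qnum e qQ (\<mu> - 2 * (int m + 1))"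
    by (rule qnum_raising_identity[OF e generic_qQ])
  then show "pi_eval e (piv * raising_coeff \<mu> (Suc m) + qint_bar (\<mu> - 2 * int (Suc m)))
      = pi_eval e (raising_coeff \<mu> (Suc (Suc m)))"
    using e by (simp add: raising_coeff_def pi_eval_add pi_eval_mult pi_eval_piv pi_eval_qint
        pi_eval_qint_bar algebra_simps)
qed

lemma lowering_coeff_Suc:
  "piv * lowering_coeff \<mu> (Suc m) - piv * qint_bar (\<mu> + 2 * int (Suc m))
    = lowering_coeff \<mu> (Suc (Suc m))"
proof (rule qpi_eqI_sign)
  fix e :: Qq
  assume e: "is_sign e"
  have "qnum e qQ (int m + 1 + 1) * (e powi (\<mu> + (int m + 1) - 1) * qnum e qQ (\<mu> + (int m + 1)))
      - qnum e qQ (int m + 1) * (e powi (\<mu> + (int m + 1) - 2) * qnum e qQ (\<mu> + (int m + 1) - 1))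
     = e powi (int m + 1) * (e powi (\<mu> + 2 * (int m + 1) - 1) * qnum e qQ (\<mu> + 2 * (int m + 1)))"
    by (rule qnum_lowering_identity[OF e generic_qQ])
  moreover have "\<mu> + (int m + 1) = \<mu> + int m + 1" "\<mu> + int m + 1 - 1 = \<mu> + int m"
    "\<mu> + int m + 1 - 2 = \<mu> + int m - 1" "2 * (int m + 1) = 2 * int m + 2"
    "\<mu> + (2 * int m + 2) = \<mu> + 2 * int m + 2" "\<mu> + 2 * int m + 2 - 1 = \<mu> + 2 * int m + 1"
    "int m + 1 + 1 = int m + 2" "e powi (int m + 1) = e ^ m * e"
    by (simp_all add: power_int_add)
  ultimately have identity:
    "qnum e qQ (int m + 2) * (e powi (\<mu> + int m) * qnum e qQ (\<mu> + int m + 1))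
      - qnum e qQ (int m + 1) * (e powi (\<mu> + int m - 1) * qnum e qQ (\<mu> + int m))
     = e ^ m * e * (e powi (\<mu> + 2 * int m + 1) * qnum e qQ (\<mu> + 2 * int m + 2))"
    by simp
  have rearrange: "e * (- (e * p) * D * (G * H)) - e * K = - (e * (e * p)) * A * (B * C)"
    if "A * (B * C) - D * (G * H) = p * e * K" "p * p = 1" for A B C D G H K p :: Qq
    using that is_sign_square[OF e] by algebra
  have "e ^ m * e ^ m = 1"
    using is_sign_square[OF is_sign_power[OF e]] .
  from rearrange[OF identity this] have
    "e * (- (e ^ Suc m) * qnum e qQ (int m + 1) * (e powi (\<mu> + int m - 1) * qnum e qQ (\<mu> + int m)))
       - e * (e powi (\<mu> + 2 * int m + 1) * qnum e qQ (\<mu> + 2 * int m + 2))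
     = - (e ^ Suc (Suc m)) * qnum e qQ (int m + 2) * (e powi (\<mu> + int m) * qnum e qQ (\<mu> + int m + 1))"
    unfolding power_Suc .
  then show "pi_eval e (piv * lowering_coeff \<mu> (Suc m) - piv * qint_bar (\<mu> + 2 * int (Suc m)))
      = pi_eval e (lowering_coeff \<mu> (Suc (Suc m)))"
    using e by (simp add: lowering_coeff_def pi_eval_diff pi_eval_mult pi_eval_minus pi_eval_power
        pi_eval_piv pi_eval_qint pi_eval_qint_bar add_ac)
qed

lemma qpi_unit_raising_coeff: "m \<noteq> 0 \<Longrightarrow> \<mu> - int m + 1 \<noteq> 0 \<Longrightarrow> qpi_unit (raising_coeff \<mu> m)"
  by (simp add: raising_coeff_def qpi_unit_mult qpi_unit_qint qpi_unit_qint_bar)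

lemma qpi_unit_lowering_coeff: "m \<noteq> 0 \<Longrightarrow> \<mu> + int m - 1 \<noteq> 0 \<Longrightarrow> qpi_unit (lowering_coeff \<mu> m)"
  by (simp add: lowering_coeff_def qpi_unit_mult qpi_unit_qint qpi_unit_qint_bar qpi_unit_minus
      qpi_unit_power qpi_unit_piv)

section \<open>A $q$-Vandermonde identity\<close>

text \<open>Gaussian binomials in two parameters $a$, $b$ (used with $a = \pm q$, $b = q^{-1}$).  The
  convolution identity compares coefficients of $X^m$ in
  $\prod_{i<j}(1 - a^{j-1-i} b^{i+1} X) \cdot \prod_{i\le j}(1 - a^{j-i} b^i X)^{-1} = (1 - a^j X)^{-1}$.\<close>

unbundle fps_syntax

definition gauss_int :: "'a::field \<Rightarrow> 'a \<Rightarrow> nat \<Rightarrow> 'a" where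
  "gauss_int a b i = (a ^ i - b ^ i) / (a - b)"

definition gauss_fact :: "'a::field \<Rightarrow> 'a \<Rightarrow> nat \<Rightarrow> 'a" where
  "gauss_fact a b N = (\<Prod>i=1..N. gauss_int a b i)"

definition gauss_binom :: "'a::field \<Rightarrow> 'a \<Rightarrow> nat \<Rightarrow> nat \<Rightarrow> 'a" where
  "gauss_binom a b N K =
     (if K \<le> N then gauss_fact a b N / (gauss_fact a b K * gauss_fact a b (N - K)) else 0)"

definition distinct_powers :: "'a::field \<Rightarrow> 'a \<Rightarrow> bool" where
  "distinct_powers a b \<longleftrightarrow> (\<forall>i>0. a ^ i \<noteq> b ^ i)"

definition triangle :: "nat \<Rightarrow> nat" where
  "triangle f = (\<Sum>i<f. i)"

lemma triangle_0: "triangle 0 = 0"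
  by (simp add: triangle_def)
lemma triangle_Suc: "triangle (Suc f) = triangle f + f"
  by (simp add: triangle_def)

lemma gauss_int_nonzero: "distinct_powers a b \<Longrightarrow> i > 0 \<Longrightarrow> gauss_int a b i \<noteq> 0"
  unfolding distinct_powers_def gauss_int_def by (metis divide_eq_0_iff power_one_right right_minus_eq zero_less_one)
lemma gauss_fact_0: "gauss_fact a b 0 = 1"
  by (simp add: gauss_fact_def)
lemma gauss_fact_Suc: "gauss_fact a b (Suc N) = gauss_fact a b N * gauss_int a b (Suc N)"
  by (simp add: gauss_fact_def)
lemma gauss_fact_nonzero: "distinct_powers a b \<Longrightarrow> gauss_fact a b N \<noteq> 0"
  by (induct N) (simp_all add: gauss_fact_0 gauss_fact_Suc gauss_int_nonzero)

lemma gauss_binom_0: "distinct_powers a b \<Longrightarrow> gauss_binom a b N 0 = 1"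
  using gauss_fact_nonzero[of a b N] by (simp add: gauss_binom_def gauss_fact_0)
lemma gauss_binom_diag: "distinct_powers a b \<Longrightarrow> gauss_binom a b N N = 1"
  using gauss_fact_nonzero[of a b N] by (simp add: gauss_binom_def gauss_fact_0)
lemma gauss_binom_gt: "N < K \<Longrightarrow> gauss_binom a b N K = 0"
  by (simp add: gauss_binom_def)

lemma gauss_int_pascal:
  assumes "distinct_powers a b" and "K \<le> N"
  shows "gauss_int a b (Suc N) = b ^ K * gauss_int a b (Suc N - K) + a ^ (Suc N - K) * gauss_int a b K"
proof -
  have "a ^ Suc N = a ^ (Suc N - K) * a ^ K" "b ^ Suc N = b ^ K * b ^ (Suc N - K)"
    using assms(2) by (simp_all flip: power_add)
  then have "a ^ Suc N - b ^ Suc N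
      = b ^ K * (a ^ (Suc N - K) - b ^ (Suc N - K)) + a ^ (Suc N - K) * (a ^ K - b ^ K)"
    by (simp add: algebra_simps)
  then show ?thesis
    unfolding gauss_int_def by (simp add: add_divide_distrib)
qed

lemma gauss_binom_pascal:
  assumes ab: "distinct_powers a b" and K: "1 \<le> K"
  shows "gauss_binom a b (Suc N) K = b ^ K * gauss_binom a b N K + a ^ (Suc N - K) * gauss_binom a b N (K - 1)"
proof (cases "K \<le> N")
  case True
  obtain K' where K': "K = Suc K'"
    using K by (cases K) auto
  have nonzero: "gauss_fact a b K' \<noteq> 0" "gauss_fact a b (N - K') \<noteq> 0" "gauss_fact a b (N - K) \<noteq> 0"
    "gauss_int a b K \<noteq> 0" "gauss_int a b (Suc N - K) \<noteq> 0"
    using ab True by (simp_all add: gauss_fact_nonzero gauss_int_nonzero K')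
  have "N - K' = Suc (N - K)" "Suc N - K = Suc (N - K)"
    using True K' by simp_all
  then have "gauss_fact a b K = gauss_fact a b K' * gauss_int a b K"
    "gauss_fact a b (Suc N - K) = gauss_fact a b (N - K) * gauss_int a b (Suc N - K)"
    "gauss_fact a b (N - K') = gauss_fact a b (N - K) * gauss_int a b (Suc N - K)"
    "gauss_fact a b (Suc N) = gauss_fact a b N * gauss_int a b (Suc N)"
    by (simp_all add: K' gauss_fact_Suc)
  with True nonzero gauss_int_pascal[OF ab True] gauss_fact_nonzero[OF ab] show ?thesis
    unfolding gauss_binom_def K' by (simp add: field_simps)
next
  case False
  then show ?thesis
    using ab by (cases "K = Suc N") (simp_all add: gauss_binom_def gauss_fact_nonzero)
qed

lemma fps_nth_one_plus_X_mult:
  fixes G :: "'a::comm_ring_1 fps"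
  shows "((1 + fps_const C * fps_X) * G) $ n = G $ n + C * (if n = 0 then 0 else G $ (n - 1))"
proof -
  have "(1 + fps_const C * fps_X) * G = G + fps_const C * (fps_X * G)"
    by (simp add: algebra_simps)
  then show ?thesis
    by simp
qed

lemma fps_nth_mult_one_minus_X:
  fixes G :: "'a::comm_ring_1 fps"
  shows "(G * (1 - fps_const C * fps_X)) $ n = G $ n - C * (if n = 0 then 0 else G $ (n - 1))"
proof -
  have "G * (1 - fps_const C * fps_X) = G - fps_const C * (fps_X * G)"
    by (simp add: algebra_simps)
  then show ?thesis
    by simp
qed

definition cauchy_prod :: "'a::field \<Rightarrow> 'a \<Rightarrow> nat \<Rightarrow> 'a \<Rightarrow> 'a fps" where
  "cauchy_prod a b j c = (\<Prod>i<j. 1 + fps_const (c * a ^ (j - 1 - i) * b ^ i) * fps_X)"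

definition cauchy_series :: "'a::field \<Rightarrow> 'a \<Rightarrow> nat \<Rightarrow> 'a \<Rightarrow> 'a fps" where
  "cauchy_series a b j c = Abs_fps (\<lambda>d. c ^ d * gauss_binom a b (j + d) d)"

definition cauchy_denom :: "'a::field \<Rightarrow> 'a \<Rightarrow> nat \<Rightarrow> 'a \<Rightarrow> 'a fps" where
  "cauchy_denom a b j c = (\<Prod>i<Suc j. 1 - fps_const (c * a ^ (j - i) * b ^ i) * fps_X)"

lemma cauchy_prod_Suc:
  "cauchy_prod a b (Suc j) c = (1 + fps_const (c * a ^ j) * fps_X) * cauchy_prod a b j (c * b)"
  unfolding cauchy_prod_def prod.lessThan_Suc_shift by (simp add: mult_ac)

lemma cauchy_denom_Suc:
  "cauchy_denom a b (Suc j) c = (1 - fps_const (c * a ^ Suc j) * fps_X) * cauchy_denom a b j (c * b)"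
  unfolding cauchy_denom_def prod.lessThan_Suc_shift[of _ "Suc j"] by (simp add: mult_ac)

lemma cauchy_prod_nth:
  assumes ab: "distinct_powers a b"
  shows "cauchy_prod a b j c $ f = c ^ f * (a * b) ^ triangle f * gauss_binom a b j f"
proof (induct j arbitrary: c f)
  case 0
  show ?case
    by (cases f) (simp_all add: cauchy_prod_def gauss_binom_def gauss_fact_0 triangle_0)
next
  case (Suc j)
  show ?case
  proof (cases f)
    case 0
    then show ?thesis
      by (simp add: cauchy_prod_Suc fps_nth_one_plus_X_mult Suc gauss_binom_0[OF ab] triangle_0)
  next
    case (Suc f')
    have pascal: "gauss_binom a b (Suc j) (Suc f')
        = b ^ Suc f' * gauss_binom a b j (Suc f') + a ^ (Suc j - Suc f') * gauss_binom a b j f'"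
      using gauss_binom_pascal[OF ab, of "Suc f'" j] by simp
    have "c * a ^ j * ((c * b) ^ f' * (a * b) ^ triangle f' * gauss_binom a b j f')
        = c ^ Suc f' * (a * b) ^ triangle (Suc f') * (a ^ (Suc j - Suc f') * gauss_binom a b j f')"
    proof (cases "f' \<le> j")
      case True
      then have "a ^ j = a ^ f' * a ^ (j - f')"
        by (simp flip: power_add)
      moreover have "(a * b) ^ triangle (Suc f') = (a * b) ^ triangle f' * a ^ f' * b ^ f'"
        by (simp add: triangle_Suc power_add power_mult_distrib)
      ultimately show ?thesis
        by (simp add: power_mult_distrib mult_ac)
    qed (simp add: gauss_binom_gt)
    then have "c * a ^ j * cauchy_prod a b j (c * b) $ f'
        = c ^ Suc f' * (a * b) ^ triangle (Suc f') * (a ^ (Suc j - Suc f') * gauss_binom a b j f')"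
      by (simp add: Suc.hyps)
    moreover have "cauchy_prod a b j (c * b) $ Suc f'
        = c ^ Suc f' * (a * b) ^ triangle (Suc f') * (b ^ Suc f' * gauss_binom a b j (Suc f'))"
      by (simp add: Suc.hyps power_mult_distrib mult_ac)
    ultimately show ?thesis
      unfolding Suc cauchy_prod_Suc fps_nth_one_plus_X_mult pascal by (simp add: distrib_left)
  qed
qed

lemma cauchy_series_step:
  assumes ab: "distinct_powers a b"
  shows "cauchy_series a b (Suc j) c * (1 - fps_const (c * a ^ Suc j) * fps_X) = cauchy_series a b j (c * b)"
proof (rule fps_ext)
  fix d
  show "(cauchy_series a b (Suc j) c * (1 - fps_const (c * a ^ Suc j) * fps_X)) $ d
      = cauchy_series a b j (c * b) $ d"
  proof (cases d)
    case 0
    then show ?thesis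
      by (simp add: fps_nth_mult_one_minus_X cauchy_series_def gauss_binom_0[OF ab])
  next
    case (Suc d')
    have "gauss_binom a b (Suc (Suc (d' + j))) (Suc d')
        = b ^ Suc d' * gauss_binom a b (Suc (d' + j)) (Suc d') + a ^ (Suc j) * gauss_binom a b (Suc (d' + j)) d'"
      using gauss_binom_pascal[OF ab, of "Suc d'" "Suc (d' + j)"] by simp
    then show ?thesis
      unfolding Suc fps_nth_mult_one_minus_X cauchy_series_def by (simp add: power_mult_distrib algebra_simps)
  qed
qed

lemma cauchy_series_times_denom:
  assumes ab: "distinct_powers a b"
  shows "cauchy_series a b j c * cauchy_denom a b j c = 1"
proof (induct j arbitrary: c)
  case 0
  show ?case
  proof (rule fps_ext)
    fix n
    show "(cauchy_series a b 0 c * cauchy_denom a b 0 c) $ n = 1 $ n"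
      by (cases n)
        (simp_all add: cauchy_denom_def cauchy_series_def fps_nth_mult_one_minus_X gauss_binom_diag[OF ab])
  qed
next
  case (Suc j)
  have "cauchy_series a b (Suc j) c * cauchy_denom a b (Suc j) c
      = (cauchy_series a b (Suc j) c * (1 - fps_const (c * a ^ Suc j) * fps_X)) * cauchy_denom a b j (c * b)"
    by (simp add: cauchy_denom_Suc mult.assoc)
  also have "\<dots> = 1"
    by (simp only: cauchy_series_step[OF ab] Suc.hyps)
  finally show ?case .
qed

lemma cauchy_prod_times_factor:
  "cauchy_prod a b j (- b) * (1 - fps_const (a ^ j) * fps_X) = cauchy_denom a b j 1"
proof -
  have "1 + fps_const (- b * a ^ (j - 1 - i) * b ^ i) * fps_X
      = 1 - fps_const (1 * a ^ (j - Suc i) * b ^ Suc i) * fps_X" for i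
    by (simp add: mult_ac flip: fps_const_neg)
  then have "cauchy_prod a b j (- b) = (\<Prod>i<j. 1 - fps_const (1 * a ^ (j - Suc i) * b ^ Suc i) * fps_X)"
    unfolding cauchy_prod_def by simp
  then show ?thesis
    unfolding cauchy_denom_def prod.lessThan_Suc_shift by (simp add: mult_ac)
qed

lemma gauss_binom_convolution:
  assumes ab: "distinct_powers a b"
  shows "(\<Sum>f=0..m. (- b) ^ f * (a * b) ^ triangle f * gauss_binom a b j f * gauss_binom a b (j + (m - f)) (m - f))
    = a ^ (j * m)"
proof -
  define H where "H = cauchy_prod a b j (- b) * cauchy_series a b j 1"
  have H: "H * (1 - fps_const (a ^ j) * fps_X) = 1"
    unfolding H_def using cauchy_series_times_denom[OF ab, of j 1] cauchy_prod_times_factor[of a b j]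
    by (simp add: mult_ac)
  have "H $ 0 = 1" "H $ Suc n = a ^ j * H $ n" for n
    using arg_cong[OF H, of "\<lambda>f. f $ 0"] arg_cong[OF H, of "\<lambda>f. f $ Suc n"]
    by (simp_all add: fps_nth_mult_one_minus_X)
  then have "H $ m = a ^ (j * m)"
    by (induct m) (simp_all add: power_add mult.commute)
  moreover have "H $ m = (\<Sum>f=0..m. (- b) ^ f * (a * b) ^ triangle f * gauss_binom a b j f
      * gauss_binom a b (j + (m - f)) (m - f))"
    unfolding H_def fps_mult_nth by (simp add: cauchy_prod_nth[OF ab] cauchy_series_def mult.assoc)
  ultimately show ?thesis
    by simp
qed

definition qnum_fact :: "Qq \<Rightarrow> Qq \<Rightarrow> nat \<Rightarrow> Qq" where
  "qnum_fact e Q N = (\<Prod>i=1..N. qnum e Q (int i))"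

lemma qnum_fact_Suc: "qnum_fact e Q (Suc N) = qnum_fact e Q N * qnum e Q (int (Suc N))"
  by (simp add: qnum_fact_def)

lemma qnum_eq_gauss_int: "qnum e Q (int i) = gauss_int (e * Q) (inverse Q) i"
  by (simp add: qnum_def gauss_int_def power_int_minus power_inverse)

lemma qnum_fact_eq_gauss_fact: "qnum_fact e Q N = gauss_fact (e * Q) (inverse Q) N"
  by (simp add: qnum_fact_def gauss_fact_def qnum_eq_gauss_int)

lemma distinct_powers_qnum:
  assumes e: "is_sign e" and Q: "generic Q"
  shows "distinct_powers (e * Q) (inverse Q)"
  unfolding distinct_powers_def
proof (intro allI impI)
  fix i :: nat
  assume "i > 0"
  then have "gauss_int (e * Q) (inverse Q) i \<noteq> 0"
    using qnum_nonzero[OF e Q, of "int i"] by (simp add: qnum_eq_gauss_int)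
  then show "(e * Q) ^ i \<noteq> inverse Q ^ i"
    by (auto simp: gauss_int_def)
qed

lemma qnum_fact_nonzero: "is_sign e \<Longrightarrow> generic Q \<Longrightarrow> qnum_fact e Q N \<noteq> 0"
  by (simp add: qnum_fact_eq_gauss_fact gauss_fact_nonzero distinct_powers_qnum)

lemma qnum_fact_inverse_param:
  assumes e: "is_sign e" and Q: "generic Q"
  shows "qnum_fact e (inverse Q) N = e ^ triangle N * qnum_fact e Q N"
proof (induct N)
  case 0
  then show ?case
    by (simp add: qnum_fact_def triangle_0)
next
  case (Suc N)
  have "qnum e (inverse Q) (int (Suc N)) = e ^ N * qnum e Q (int (Suc N))"
    using qnum_inverse_param[OF e Q, of "int (Suc N)"] by (simp add: power_int_of_nat)
  then show ?case
    by (simp add: qnum_fact_Suc Suc triangle_Suc power_add mult_ac)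
qed

lemma qnum_fact_sum_closed_form:
  assumes e: "is_sign e" and Q: "generic Q"
  shows "(\<Sum>d\<in>{d. m \<le> j + d \<and> d \<le> m}. (- Q) ^ d * qnum_fact e Q (j + d) * qnum_fact e (inverse Q) j
            / (qnum_fact e Q (j + d - m) * qnum_fact e Q d * qnum_fact e Q j * qnum_fact e (inverse Q) (m - d)))
         = (- Q) ^ m * Q ^ (j * m) * e ^ (triangle j + j * m)"
proof -
  define a where "a = e * Q"
  define b where "b = inverse Q"
  have "Q \<noteq> 0"
    using Q by (simp add: generic_def)
  have ab: "distinct_powers a b"
    unfolding a_def b_def by (rule distinct_powers_qnum[OF e Q])
  have abe: "a * b = e"
    using \<open>Q \<noteq> 0\<close> by (simp add: a_def b_def)
  let ?t = "\<lambda>d. (- Q) ^ d * qnum_fact e Q (j + d) * qnum_fact e (inverse Q) j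
            / (qnum_fact e Q (j + d - m) * qnum_fact e Q d * qnum_fact e Q j * qnum_fact e (inverse Q) (m - d))"
  let ?v = "\<lambda>f. (- b) ^ f * (a * b) ^ triangle f * gauss_binom a b j f * gauss_binom a b (j + (m - f)) (m - f)"
  have summand: "?t (m - f) = (- Q) ^ m * e ^ triangle j * ?v f" if f: "f \<le> m" "f \<le> j" for f
  proof -
    have nonzero: "qnum_fact e Q N \<noteq> 0" for N
      using qnum_fact_nonzero[OF e Q] .
    have binom1: "gauss_binom a b (j + (m - f)) (m - f)
        = qnum_fact e Q (j + (m - f)) / (qnum_fact e Q (m - f) * qnum_fact e Q j)"
      by (simp add: gauss_binom_def qnum_fact_eq_gauss_fact a_def b_def)
    have binom2: "gauss_binom a b j f = qnum_fact e Q j / (qnum_fact e Q f * qnum_fact e Q (j - f))"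
      using f by (simp add: gauss_binom_def qnum_fact_eq_gauss_fact a_def b_def)
    have index: "j + (m - f) - m = j - f" "m - (m - f) = f"
      using f by simp_all
    have power: "(- Q) ^ m = (- Q) ^ (m - f) * (- Q) ^ f"
      using f by (simp flip: power_add)
    have "(- Q) ^ f * (- b) ^ f = 1" "e ^ triangle f * e ^ triangle f = 1"
      using \<open>Q \<noteq> 0\<close> is_sign_square[OF is_sign_power[OF e]]
      by (simp_all add: b_def flip: power_mult_distrib)
    then show ?thesis
      unfolding index qnum_fact_inverse_param[OF e Q] binom1 binom2 abe power
      using nonzero is_sign_nonzero[OF e] by (simp add: field_simps power_mult_distrib)
  qed
  have "(\<Sum>d\<in>{d. m \<le> j + d \<and> d \<le> m}. ?t d) = (\<Sum>f\<in>{f. f \<le> m \<and> f \<le> j}. ?t (m - f))"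
    by (rule sum.reindex_bij_witness[of _ "\<lambda>d. m - d" "\<lambda>f. m - f"]) auto
  also have "\<dots> = (\<Sum>f\<in>{f. f \<le> m \<and> f \<le> j}. (- Q) ^ m * e ^ triangle j * ?v f)"
    by (rule sum.cong[OF refl], rule summand) auto
  also have "\<dots> = (\<Sum>f\<in>{0..m}. (- Q) ^ m * e ^ triangle j * ?v f)"
    by (rule sum.mono_neutral_left) (auto simp: gauss_binom_gt)
  also have "\<dots> = (- Q) ^ m * e ^ triangle j * a ^ (j * m)"
    by (subst sum_distrib_left[symmetric]) (simp only: gauss_binom_convolution[OF ab])
  also have "\<dots> = (- Q) ^ m * Q ^ (j * m) * e ^ (triangle j + j * m)"
    by (simp add: a_def power_add power_mult_distrib mult_ac)
  finally show ?thesis .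
qed

section \<open>The string coefficients of $T$ and $T'$\<close>

text \<open>For a highest weight vector $x$ of weight $j + m$, $T$ maps $F^{(j)} x$ to
  \<open>T_string_coeff j m\<close>$\,F^{(m)} x$ and $T'$ maps $F^{(m)} x$ to
  \<open>T'_string_coeff j m\<close>$\,F^{(j)} x$; the product of the two coefficients is $1$.\<close>

definition T_string_coeff :: "nat \<Rightarrow> nat \<Rightarrow> qpi" where
  "T_string_coeff j m = (\<Sum>d\<in>{d. m \<le> j + d \<and> d \<le> m}.
     (- qv) ^ d * qinv (qfact (j + d - m)) * qinv (qfact d) * qinv (qfact j)
       * (\<Prod>i\<in>{m<..j + d}. raising_coeff (int (j + m)) i) * qfact m)"

definition T'_string_coeff :: "nat \<Rightarrow> nat \<Rightarrow> qpi" where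
  "T'_string_coeff j m = (\<Sum>d\<in>{d. m \<le> j + d \<and> d \<le> m}.
     qinv (- qv) ^ d * qinv (qbar (qfact (j + d - m))) * qinv (qbar (qfact d)) * qinv (qfact m)
       * (\<Prod>i\<in>{m - d<..m}. raising_coeff (int (j + m)) i) * qfact j)"

lemma pi_eval_qfact: "is_sign e \<Longrightarrow> pi_eval e (qfact N) = qnum_fact e qQ N"
  by (simp add: qfact_def qnum_fact_def pi_eval_prod pi_eval_qint)

lemma pi_eval_qbar_qfact: "is_sign e \<Longrightarrow> pi_eval e (qbar (qfact N)) = qnum_fact e (inverse qQ) N"
  by (simp add: pi_eval_qbar pi_eval_qfact qnum_fact_def barQ_prod barQ_qnum barQ_qQ)

lemma qpi_unit_qbar_qfact: "qpi_unit (qbar (qfact N))"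
  by (simp add: qpi_unit_iff pi_eval_qbar_qfact qnum_fact_nonzero generic_inverse generic_qQ)

lemma pi_eval_raising_coeff:
  "is_sign e \<Longrightarrow> pi_eval e (raising_coeff n i) = qnum e qQ (int i) * qnum e (inverse qQ) (n - int i + 1)"
  by (simp add: raising_coeff_def pi_eval_mult pi_eval_qint pi_eval_qint_bar qnum_inverse_param generic_qQ)

lemma qnum_prod_Ioc:
  assumes e: "is_sign e" and Q: "generic Q" and "m \<le> N"
  shows "(\<Prod>i\<in>{m<..N}. qnum e Q (int i)) = qnum_fact e Q N / qnum_fact e Q m"
proof -
  have "{1..N} = {1..m} \<union> {m<..N}"
    using assms(3) by auto
  then have "qnum_fact e Q N = qnum_fact e Q m * (\<Prod>i\<in>{m<..N}. qnum e Q (int i))"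
    unfolding qnum_fact_def by (simp add: prod.union_disjoint ivl_disj_int)
  then show ?thesis
    using qnum_fact_nonzero[OF e Q, of m] by (simp add: field_simps)
qed

lemma qnum_prod_reflected:
  assumes e: "is_sign e" and Q: "generic Q" and "a \<le> b" and "b \<le> n"
  shows "(\<Prod>i\<in>{a<..b}. qnum e Q (int n - int i + 1)) = qnum_fact e Q (n - a) / qnum_fact e Q (n - b)"
proof -
  have "(\<Prod>i\<in>{a<..b}. qnum e Q (int n - int i + 1)) = (\<Prod>k\<in>{n - b<..n - a}. qnum e Q (int k))"
    by (rule prod.reindex_bij_witness[of _ "\<lambda>k. n + 1 - k" "\<lambda>i. n + 1 - i"])
      (use assms in \<open>auto simp: algebra_simps\<close>)
  also have "\<dots> = qnum_fact e Q (n - a) / qnum_fact e Q (n - b)"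
    by (rule qnum_prod_Ioc[OF e Q]) (use assms in simp)
  finally show ?thesis .
qed

lemma pi_eval_T_string_coeff:
  assumes e: "is_sign e"
  shows "pi_eval e (T_string_coeff j m) = (\<Sum>d\<in>{d. m \<le> j + d \<and> d \<le> m}.
    (- qQ) ^ d * qnum_fact e qQ (j + d) * qnum_fact e (inverse qQ) j
      / (qnum_fact e qQ (j + d - m) * qnum_fact e qQ d * qnum_fact e qQ j * qnum_fact e (inverse qQ) (m - d)))"
  unfolding T_string_coeff_def pi_eval_sum
proof (rule sum.cong[OF refl])
  fix d
  assume "d \<in> {d. m \<le> j + d \<and> d \<le> m}"
  then have d: "m \<le> j + d" "d \<le> m"
    by auto
  have Q: "generic qQ" "generic (inverse qQ)"
    by (simp_all add: generic_qQ generic_inverse)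
  have "pi_eval e (\<Prod>i\<in>{m<..j + d}. raising_coeff (int (j + m)) i)
      = qnum_fact e qQ (j + d) / qnum_fact e qQ m * (qnum_fact e (inverse qQ) j / qnum_fact e (inverse qQ) (m - d))"
    using qnum_prod_Ioc[OF e Q(1) d(1)] qnum_prod_reflected[OF e Q(2) d(1), of "j + m"] d
    by (simp add: pi_eval_prod[OF e] pi_eval_raising_coeff[OF e] prod.distrib)
  moreover have "qnum_fact e qQ N \<noteq> 0" "qnum_fact e (inverse qQ) N \<noteq> 0" for N
    using qnum_fact_nonzero[OF e Q(1)] qnum_fact_nonzero[OF e Q(2)] by auto
  ultimately show "pi_eval e ((- qv) ^ d * qinv (qfact (j + d - m)) * qinv (qfact d) * qinv (qfact j)
        * (\<Prod>i\<in>{m<..j + d}. raising_coeff (int (j + m)) i) * qfact m)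
      = (- qQ) ^ d * qnum_fact e qQ (j + d) * qnum_fact e (inverse qQ) j
        / (qnum_fact e qQ (j + d - m) * qnum_fact e qQ d * qnum_fact e qQ j * qnum_fact e (inverse qQ) (m - d))"
    by (simp only: pi_eval_mult[OF e])
      (simp add: pi_eval_power[OF e] pi_eval_minus pi_eval_qv pi_eval_qinv[OF qpi_unit_qfact e]
        pi_eval_qfact[OF e] field_simps)
qed

lemma pi_eval_T'_string_coeff:
  assumes e: "is_sign e"
  shows "pi_eval e (T'_string_coeff j m) = (\<Sum>d\<in>{d. m \<le> j + d \<and> d \<le> m}.
    (- inverse qQ) ^ d * qnum_fact e (inverse qQ) (j + d) * qnum_fact e (inverse (inverse qQ)) j
      / (qnum_fact e (inverse qQ) (j + d - m) * qnum_fact e (inverse qQ) d * qnum_fact e (inverse qQ) j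
         * qnum_fact e (inverse (inverse qQ)) (m - d)))"
  unfolding T'_string_coeff_def pi_eval_sum
proof (rule sum.cong[OF refl])
  fix d
  assume "d \<in> {d. m \<le> j + d \<and> d \<le> m}"
  then have d: "m \<le> j + d" "d \<le> m"
    by auto
  have Q: "generic qQ" "generic (inverse qQ)"
    by (simp_all add: generic_qQ generic_inverse)
  have "pi_eval e (\<Prod>i\<in>{m - d<..m}. raising_coeff (int (j + m)) i)
      = qnum_fact e qQ m / qnum_fact e qQ (m - d) * (qnum_fact e (inverse qQ) (j + d) / qnum_fact e (inverse qQ) j)"
    using qnum_prod_Ioc[OF e Q(1), of "m - d" m] qnum_prod_reflected[OF e Q(2), of "m - d" m "j + m"] d
    by (simp add: pi_eval_prod[OF e] pi_eval_raising_coeff[OF e] prod.distrib)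
  moreover have "qnum_fact e qQ N \<noteq> 0" "qnum_fact e (inverse qQ) N \<noteq> 0" for N
    using qnum_fact_nonzero[OF e Q(1)] qnum_fact_nonzero[OF e Q(2)] by auto
  moreover have "pi_eval e (qinv (- qv)) = inverse (- qQ)"
    using pi_eval_qinv[OF qpi_unit_minus[OF qpi_unit_qv] e] by (simp add: pi_eval_minus pi_eval_qv)
  ultimately show "pi_eval e (qinv (- qv) ^ d * qinv (qbar (qfact (j + d - m))) * qinv (qbar (qfact d))
        * qinv (qfact m) * (\<Prod>i\<in>{m - d<..m}. raising_coeff (int (j + m)) i) * qfact j)
      = (- inverse qQ) ^ d * qnum_fact e (inverse qQ) (j + d) * qnum_fact e (inverse (inverse qQ)) j
        / (qnum_fact e (inverse qQ) (j + d - m) * qnum_fact e (inverse qQ) d * qnum_fact e (inverse qQ) j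
           * qnum_fact e (inverse (inverse qQ)) (m - d))"
    by (simp add: pi_eval_mult[OF e] pi_eval_power[OF e] pi_eval_qinv[OF qpi_unit_qfact e]
        pi_eval_qinv[OF qpi_unit_qbar_qfact e] pi_eval_qfact[OF e] pi_eval_qbar_qfact[OF e] field_simps)
qed

lemma T_string_coeff_inverse: "T_string_coeff j m * T'_string_coeff j m = 1"
proof (rule qpi_eqI_sign)
  fix e
  assume e: "is_sign e"
  have Q: "generic qQ" "generic (inverse qQ)"
    by (simp_all add: generic_qQ generic_inverse)
  have "pi_eval e (T_string_coeff j m * T'_string_coeff j m)
      = ((- qQ) ^ m * qQ ^ (j * m) * e ^ (triangle j + j * m))
        * ((- inverse qQ) ^ m * (inverse qQ) ^ (j * m) * e ^ (triangle j + j * m))"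
    using qnum_fact_sum_closed_form[OF e Q(1), where j = j and m = m]
      qnum_fact_sum_closed_form[OF e Q(2), where j = j and m = m]
    by (simp add: pi_eval_mult[OF e] pi_eval_T_string_coeff[OF e] pi_eval_T'_string_coeff[OF e])
  also have "\<dots> = ((- qQ) * (- inverse qQ)) ^ m * (qQ * inverse qQ) ^ (j * m)
      * (e ^ (triangle j + j * m) * e ^ (triangle j + j * m))"
    by (simp only: power_mult_distrib mult_ac)
  also have "\<dots> = 1"
    using qQ_nonzero is_sign_square[OF is_sign_power[OF e]] by simp
  finally show "pi_eval e (T_string_coeff j m * T'_string_coeff j m) = pi_eval e 1"
    by (simp add: pi_eval_1)
qed

lemma qlinear_add: "qlinear scal f \<Longrightarrow> f (x + y) = f x + f y"
  by (simp add: qlinear_def)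
lemma qlinear_scal: "qlinear scal f \<Longrightarrow> f (scal c x) = scal c (f x)"
  by (simp add: qlinear_def)
lemma qlinear_0: "qlinear scal f \<Longrightarrow> f 0 = 0"
  using qlinear_add[of scal f 0 0] by simp
lemma qlinear_minus: "qlinear scal f \<Longrightarrow> f (- x) = - f x"
  using qlinear_add[of scal f x "- x"] qlinear_0[of scal f] by (simp add: eq_neg_iff_add_eq_0 add.commute)
lemma qlinear_diff: "qlinear scal f \<Longrightarrow> f (x - y) = f x - f y"
  using qlinear_add[of scal f x "- y"] qlinear_minus[of scal f y] by simp
lemma qlinear_sum: "qlinear scal f \<Longrightarrow> f (sum g A) = (\<Sum>a\<in>A. f (g a))"
  by (induct A rule: infinite_finite_induct) (simp_all add: qlinear_0 qlinear_add)
lemma qlinear_funpow: "qlinear scal f \<Longrightarrow> qlinear scal (f ^^ n)"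
  by (induct n) (simp_all add: qlinear_def)

lemma qlinear_funpow_vanish_mono:
  assumes "qlinear scal f" and "(f ^^ n) v = 0" and "n \<le> m"
  shows "(f ^^ m) v = 0"
proof -
  obtain k where "m = k + n"
    using assms(3) le_Suc_ex by (metis add.commute)
  then have "(f ^^ m) v = (f ^^ k) ((f ^^ n) v)"
    by (simp add: funpow_add)
  then show ?thesis
    using assms(2) qlinear_0[OF qlinear_funpow[OF assms(1)]] by simp
qed

lemma fsum_eq_sum:
  assumes "finite B" "B \<subseteq> A" "\<And>a. a \<in> A \<Longrightarrow> a \<notin> B \<Longrightarrow> f a = 0"
  shows "fsum f A = sum f B"
  unfolding fsum_def by (rule sum.mono_neutral_left) (use assms in auto)

lemma finite_fsum_support:
  assumes "finite B" "\<And>a. a \<in> A \<Longrightarrow> a \<notin> B \<Longrightarrow> f a = 0"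
  shows "finite {d\<in>A. f d \<noteq> 0}"
  by (rule finite_subset[OF _ assms(1)]) (use assms(2) in auto)

section \<open>Integrable modules\<close>

locale integrable_module =
  fixes scal :: "qpi \<Rightarrow> 'v::ab_group_add \<Rightarrow> 'v" and P :: "int \<Rightarrow> 'v \<Rightarrow> 'v" and E F :: "'v \<Rightarrow> 'v"
  assumes integrable: "integrable scal P E F"
begin

lemma Uqpi_module_axioms: "Uqpi_module scal P E F"
  using integrable by (simp add: integrable_def)

sublocale module scal
  using Uqpi_module_axioms by (simp add: Uqpi_module_def)

lemma qlinear_P: "qlinear scal (P k)"
  using Uqpi_module_axioms by (simp add: Uqpi_module_def)
lemma qlinear_E: "qlinear scal E"
  using Uqpi_module_axioms by (simp add: Uqpi_module_def)
lemma qlinear_F: "qlinear scal F"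
  using Uqpi_module_axioms by (simp add: Uqpi_module_def)
lemma qlinear_E_power: "qlinear scal (E ^^ n)"
  by (rule qlinear_funpow[OF qlinear_E])
lemma qlinear_F_power: "qlinear scal (F ^^ n)"
  by (rule qlinear_funpow[OF qlinear_F])

lemma P_P: "P k (P l v) = (if k = l then P k v else 0)"
  using Uqpi_module_axioms by (simp add: Uqpi_module_def)
lemma weight_decomposition: "finite {k. P k v \<noteq> 0}" "v = (\<Sum>k\<in>{k. P k v \<noteq> 0}. P k v)"
  using Uqpi_module_axioms by (simp_all add: Uqpi_module_def)
lemma E_P: "E (P k v) = P (k + 2) (E v)"
  using Uqpi_module_axioms by (simp add: Uqpi_module_def)
lemma F_P: "F (P k v) = P (k - 2) (F v)"
  using Uqpi_module_axioms by (simp add: Uqpi_module_def)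
lemma EF_relation: "E (F (P k v)) - scal piv (F (E (P k v))) = scal (qint_bar k) (P k v)"
  using Uqpi_module_axioms unfolding Uqpi_module_def qint_bar_def by blast

abbreviation W :: "int \<Rightarrow> 'v set" where
  "W k \<equiv> range (P k)"

lemma mem_W_iff: "v \<in> W k \<longleftrightarrow> P k v = v"
  by (auto simp: P_P) (metis rangeI)
lemma W_add: "x \<in> W k \<Longrightarrow> y \<in> W k \<Longrightarrow> x + y \<in> W k"
  by (simp add: mem_W_iff qlinear_add[OF qlinear_P])
lemma W_scal: "x \<in> W k \<Longrightarrow> scal c x \<in> W k"
  by (simp add: mem_W_iff qlinear_scal[OF qlinear_P])
lemma W_0: "0 \<in> W k"
  by (simp add: mem_W_iff qlinear_0[OF qlinear_P])
lemma W_diff: "x \<in> W k \<Longrightarrow> y \<in> W k \<Longrightarrow> x - y \<in> W k"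
  by (simp add: mem_W_iff qlinear_diff[OF qlinear_P])
lemma W_sum: "(\<And>a. a \<in> A \<Longrightarrow> g a \<in> W k) \<Longrightarrow> sum g A \<in> W k"
  by (induct A rule: infinite_finite_induct) (simp_all add: W_0 W_add)
lemma P_other_weight: "v \<in> W l \<Longrightarrow> k \<noteq> l \<Longrightarrow> P k v = 0"
  by (auto simp: P_P)

lemma E_W: "v \<in> W k \<Longrightarrow> E v \<in> W (k + 2)"
  by (simp add: mem_W_iff) (metis E_P P_P)
lemma F_W: "v \<in> W k \<Longrightarrow> F v \<in> W (k - 2)"
  by (simp add: mem_W_iff) (metis F_P P_P)
lemma funpow_W:
  assumes "\<And>v k. v \<in> W k \<Longrightarrow> Y v \<in> W (k - \<delta>)" and "w \<in> W k"
  shows "(Y ^^ n) w \<in> W (k - int n * \<delta>)"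
proof (induct n)
  case (Suc n)
  then show ?case
    using assms(1)[of "(Y ^^ n) w" "k - int n * \<delta>"] by (simp add: algebra_simps)
qed (simp add: assms(2))

lemma E_power_W: "v \<in> W k \<Longrightarrow> (E ^^ n) v \<in> W (k + 2 * int n)"
  using funpow_W[of E "- 2" v k n] E_W by (simp add: algebra_simps)
lemma F_power_W: "v \<in> W k \<Longrightarrow> (F ^^ n) v \<in> W (k - 2 * int n)"
  using funpow_W[of F 2 v k n] F_W by (simp add: algebra_simps)

lemma EF_commute: "v \<in> W k \<Longrightarrow> E (F v) = scal piv (F (E v)) + scal (qint_bar k) v"
  using EF_relation[of k v] by (simp add: mem_W_iff diff_eq_eq add.commute)

lemma FE_commute: "v \<in> W k \<Longrightarrow> F (E v) = scal piv (E (F v)) - scal (piv * qint_bar k) v"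
  using EF_commute[of v k] by (simp add: scale_right_distrib piv_square)

lemma locally_nilpotent: "v \<in> W k \<Longrightarrow> \<exists>n. \<forall>m\<ge>n. (E ^^ m) v = 0 \<and> (F ^^ m) v = 0"
  using integrable by (simp add: integrable_def)
lemma E_power_vanish: "v \<in> W k \<Longrightarrow> \<exists>n. (E ^^ n) v = 0"
  using locally_nilpotent by blast
lemma F_power_vanish: "v \<in> W k \<Longrightarrow> \<exists>n. (F ^^ n) v = 0"
  using locally_nilpotent by blast

lemma scal_qpi_unit_eq_0: "qpi_unit c \<Longrightarrow> scal c y = 0 \<Longrightarrow> y = 0"
  by (metis qinv_left_inverse scale_one scale_scale scale_zero_right)

lemma E_F_power_highest:
  assumes x: "x \<in> W \<mu>" and Ex: "E x = 0"
  shows "E ((F ^^ Suc m) x) = scal (raising_coeff \<mu> (Suc m)) ((F ^^ m) x)"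
proof (induct m)
  case 0
  show ?case
    using EF_commute[OF x] Ex by (simp add: qlinear_0[OF qlinear_F] raising_coeff_1[unfolded One_nat_def])
next
  case (Suc m)
  let ?w = "(F ^^ Suc m) x"
  have "E ((F ^^ Suc (Suc m)) x) = E (F ?w)"
    by simp
  also have "\<dots> = scal piv (F (E ?w)) + scal (qint_bar (\<mu> - 2 * int (Suc m))) ?w"
    by (rule EF_commute[OF F_power_W[OF x]])
  also have "\<dots> = scal (piv * raising_coeff \<mu> (Suc m) + qint_bar (\<mu> - 2 * int (Suc m))) ?w"
    using Suc by (simp add: qlinear_scal[OF qlinear_F] scale_left_distrib)
  also have "\<dots> = scal (raising_coeff \<mu> (Suc (Suc m))) ?w"
    by (simp only: raising_coeff_Suc)
  finally show ?case .
qed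

lemma F_E_power_lowest:
  assumes y: "y \<in> W \<mu>" and Fy: "F y = 0"
  shows "F ((E ^^ Suc m) y) = scal (lowering_coeff \<mu> (Suc m)) ((E ^^ m) y)"
proof (induct m)
  case 0
  show ?case
    using FE_commute[OF y] Fy by (simp add: qlinear_0[OF qlinear_E] lowering_coeff_1[unfolded One_nat_def])
next
  case (Suc m)
  let ?w = "(E ^^ Suc m) y"
  have "F ((E ^^ Suc (Suc m)) y) = F (E ?w)"
    by simp
  also have "\<dots> = scal piv (E (F ?w)) - scal (piv * qint_bar (\<mu> + 2 * int (Suc m))) ?w"
    by (rule FE_commute[OF E_power_W[OF y]])
  also have "\<dots> = scal (piv * lowering_coeff \<mu> (Suc m) - piv * qint_bar (\<mu> + 2 * int (Suc m))) ?w"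
    using Suc by (simp add: qlinear_scal[OF qlinear_E] scale_left_diff_distrib)
  also have "\<dots> = scal (lowering_coeff \<mu> (Suc (Suc m))) ?w"
    by (simp only: lowering_coeff_Suc)
  finally show ?case .
qed

lemma string_vanishes:
  assumes X: "qlinear scal X" and Y: "qlinear scal Y"
    and step: "\<And>m. X ((Y ^^ Suc m) v) = scal (c (Suc m)) ((Y ^^ m) v)"
    and nilpotent: "(Y ^^ N) v = 0"
    and units: "\<And>m. 1 \<le> m \<Longrightarrow> m \<noteq> K \<Longrightarrow> qpi_unit (c m)"
  shows "(Y ^^ K) v = 0"
proof (rule ccontr)
  assume nonzero: "(Y ^^ K) v \<noteq> 0"
  define L where "L = (LEAST n. (Y ^^ n) v = 0)"
  have L: "(Y ^^ L) v = 0"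
    unfolding L_def by (rule LeastI[of "\<lambda>n. (Y ^^ n) v = 0", OF nilpotent])
  have "K < L"
    using qlinear_funpow_vanish_mono[OF Y L] nonzero by (meson not_less)
  then obtain M where M: "L = Suc M"
    by (cases L) auto
  have "(Y ^^ M) v \<noteq> 0"
    using M Least_le[of "\<lambda>n. (Y ^^ n) v = 0" M] unfolding L_def by auto
  moreover have "scal (c (Suc M)) ((Y ^^ M) v) = 0"
    using step[of M] L M qlinear_0[OF X] by simp
  moreover have "qpi_unit (c (Suc M))"
    using units[of "Suc M"] \<open>K < L\<close> M by simp
  ultimately show False
    using scal_qpi_unit_eq_0 by blast
qed

lemma highest_weight_string_vanishes:
  assumes x: "x \<in> W (int n)" and Ex: "E x = 0"
  shows "(F ^^ Suc n) x = 0"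
proof -
  obtain N where "(F ^^ N) x = 0"
    using F_power_vanish[OF x] by blast
  then show ?thesis
    by (rule string_vanishes[OF qlinear_E qlinear_F E_F_power_highest[OF x Ex]])
      (simp add: qpi_unit_raising_coeff)
qed

lemma highest_weight_negative:
  assumes x: "x \<in> W \<mu>" and Ex: "E x = 0" and "\<mu> < 0"
  shows "x = 0"
proof -
  obtain N where "(F ^^ N) x = 0"
    using F_power_vanish[OF x] by blast
  then have "(F ^^ 0) x = 0"
    by (rule string_vanishes[OF qlinear_E qlinear_F E_F_power_highest[OF x Ex]])
      (use \<open>\<mu> < 0\<close> in \<open>simp add: qpi_unit_raising_coeff\<close>)
  then show ?thesis
    by simp
qed

lemma lowest_weight_string_vanishes:
  assumes y: "y \<in> W (- int n)" and Fy: "F y = 0"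
  shows "(E ^^ Suc n) y = 0"
proof -
  obtain N where "(E ^^ N) y = 0"
    using E_power_vanish[OF y] by blast
  then show ?thesis
    by (rule string_vanishes[OF qlinear_F qlinear_E F_E_power_lowest[OF y Fy]])
      (simp add: qpi_unit_lowering_coeff)
qed

lemma lowest_weight_positive:
  assumes y: "y \<in> W \<mu>" and Fy: "F y = 0" and "\<mu> > 0"
  shows "y = 0"
proof -
  obtain N where "(E ^^ N) y = 0"
    using E_power_vanish[OF y] by blast
  then have "(E ^^ 0) y = 0"
    by (rule string_vanishes[OF qlinear_F qlinear_E F_E_power_lowest[OF y Fy]])
      (use \<open>\<mu> > 0\<close> in \<open>simp add: qpi_unit_lowering_coeff\<close>)
  then show ?thesis
    by simp
qed


text \<open>Decomposition into strings $Y^j x_j$ of $X$-extremal vectors $x_j$, by induction on the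
  nilpotency degree of $X$: if $X v = \sum_j Y^j y_j$, then
  $v - \sum_j c_{j+1}^{-1} Y^{j+1} y_j$ is killed by $X$.\<close>

lemma string_decomposition_step:
  fixes X Y :: "'v \<Rightarrow> 'v" and \<delta> :: int and c :: "int \<Rightarrow> nat \<Rightarrow> qpi"
  assumes X: "qlinear scal X" and Y: "qlinear scal Y"
    and YW: "\<And>v k. v \<in> W k \<Longrightarrow> Y v \<in> W (k - \<delta>)"
    and step: "\<And>\<mu> x m. x \<in> W \<mu> \<Longrightarrow> X x = 0 \<Longrightarrow> X ((Y ^^ Suc m) x) = scal (c \<mu> (Suc m)) ((Y ^^ m) x)"
    and units: "\<And>i. qpi_unit (c (l + \<delta> + int i * \<delta>) (Suc i))"
    and v: "v \<in> W l"
    and Xv: "X v = (\<Sum>j<N. (Y ^^ j) (ys j))"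
    and ys: "\<And>j. j < N \<Longrightarrow> ys j \<in> W (l + \<delta> + int j * \<delta>) \<and> X (ys j) = 0"
  shows "\<exists>xs. v = (\<Sum>j<Suc N. (Y ^^ j) (xs j)) \<and> (\<forall>j<Suc N. xs j \<in> W (l + int j * \<delta>) \<and> X (xs j) = 0)"
proof -
  define lift where "lift i = scal (qinv (c (l + \<delta> + int i * \<delta>) (Suc i))) ((Y ^^ Suc i) (ys i))" for i
  define xs where "xs j = (if j = 0 then v - (\<Sum>i<N. lift i)
                           else scal (qinv (c (l + \<delta> + int (j - 1) * \<delta>) j)) (ys (j - 1)))" for j
  have X_lift: "X (lift i) = (Y ^^ i) (ys i)" if "i < N" for i
  proof -
    have "X ((Y ^^ Suc i) (ys i)) = scal (c (l + \<delta> + int i * \<delta>) (Suc i)) ((Y ^^ i) (ys i))"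
      using step ys[OF that] by blast
    then show ?thesis
      using qinv_left_inverse[OF units[of i]] by (simp add: lift_def qlinear_scal[OF X])
  qed
  have "X (xs 0) = 0"
    using X_lift by (simp add: xs_def Xv qlinear_diff[OF X] qlinear_sum[OF X])
  moreover have "xs 0 \<in> W l"
  proof -
    have "(Y ^^ Suc i) (ys i) \<in> W l" if "i < N" for i
      using funpow_W[of Y \<delta> "ys i" "l + \<delta> + int i * \<delta>" "Suc i", OF YW] ys[OF that]
      by (simp add: algebra_simps)
    then show ?thesis
      unfolding xs_def lift_def by (auto intro!: W_diff[OF v] W_sum W_scal)
  qed
  ultimately have xs: "xs j \<in> W (l + int j * \<delta>) \<and> X (xs j) = 0" if "j < Suc N" for j
  proof (cases j)
    case (Suc i)
    then have "ys i \<in> W (l + \<delta> + int i * \<delta>) \<and> X (ys i) = 0"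
      using ys that by simp
    then show ?thesis
      using Suc by (simp add: xs_def W_scal qlinear_scal[OF X] algebra_simps)
  qed simp
  have "(\<Sum>i<N. (Y ^^ Suc i) (xs (Suc i))) = (\<Sum>i<N. lift i)"
    by (simp add: xs_def lift_def qlinear_scal[OF qlinear_funpow[OF Y]] del: funpow.simps)
  then have "v = (\<Sum>j<Suc N. (Y ^^ j) (xs j))"
    unfolding sum.lessThan_Suc_shift by (simp add: xs_def)
  with xs show ?thesis
    by blast
qed

lemma string_decomposition:
  fixes X Y :: "'v \<Rightarrow> 'v" and \<delta> :: int and c :: "int \<Rightarrow> nat \<Rightarrow> qpi" and S :: "int set"
  assumes X: "qlinear scal X" and Y: "qlinear scal Y"
    and XW: "\<And>v k. v \<in> W k \<Longrightarrow> X v \<in> W (k + \<delta>)"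
    and YW: "\<And>v k. v \<in> W k \<Longrightarrow> Y v \<in> W (k - \<delta>)"
    and step: "\<And>\<mu> x m. x \<in> W \<mu> \<Longrightarrow> X x = 0 \<Longrightarrow> X ((Y ^^ Suc m) x) = scal (c \<mu> (Suc m)) ((Y ^^ m) x)"
    and X_vanish: "\<And>v k. v \<in> W k \<Longrightarrow> \<exists>n. (X ^^ n) v = 0"
    and S_closed: "\<And>l. l \<in> S \<Longrightarrow> l + \<delta> \<in> S"
    and units: "\<And>l j. l \<in> S \<Longrightarrow> qpi_unit (c (l + \<delta> + int j * \<delta>) (Suc j))"
    and "l \<in> S" and "v \<in> W l"
  shows "\<exists>N xs. v = (\<Sum>j<N. (Y ^^ j) (xs j)) \<and> (\<forall>j<N. xs j \<in> W (l + int j * \<delta>) \<and> X (xs j) = 0)"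
proof -
  obtain r where "(X ^^ r) v = 0"
    using X_vanish[OF \<open>v \<in> W l\<close>] by blast
  with \<open>l \<in> S\<close> \<open>v \<in> W l\<close> show ?thesis
  proof (induct r arbitrary: l v)
    case 0
    then show ?case
      by (intro exI[of _ 0]) simp
  next
    case (Suc r)
    have "(X ^^ r) (X v) = 0"
      using Suc.prems(3) by (simp add: funpow_swap1)
    then obtain N ys where "X v = (\<Sum>j<N. (Y ^^ j) (ys j))"
      and "\<And>j. j < N \<Longrightarrow> ys j \<in> W (l + \<delta> + int j * \<delta>) \<and> X (ys j) = 0"
      using Suc.hyps[OF S_closed[OF Suc.prems(1)] XW[OF Suc.prems(2)]] by blast
    then show ?case
      using string_decomposition_step[OF X Y YW step units[OF Suc.prems(1)] Suc.prems(2)] by blast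
  qed
qed

lemma highest_weight_string_decomposition:
  assumes "l \<ge> -1" and "v \<in> W l"
  shows "\<exists>N xs. v = (\<Sum>j<N. (F ^^ j) (xs j)) \<and> (\<forall>j<N. xs j \<in> W (l + int j * 2) \<and> E (xs j) = 0)"
  by (rule string_decomposition[OF qlinear_E qlinear_F E_W F_W E_F_power_highest E_power_vanish,
        where S = "{l. l \<ge> -1}"])
    (use assms in \<open>auto intro!: qpi_unit_raising_coeff\<close>)

lemma lowest_weight_string_decomposition:
  assumes "l \<le> 1" and "v \<in> W l"
  shows "\<exists>N xs. v = (\<Sum>j<N. (E ^^ j) (xs j)) \<and> (\<forall>j<N. xs j \<in> W (l + int j * (-2)) \<and> F (xs j) = 0)"
  by (rule string_decomposition[OF qlinear_F qlinear_E _ _ F_E_power_lowest F_power_vanish,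
        where \<delta> = "-2" and S = "{l. l \<le> 1}"])
    (use assms F_W E_W in \<open>auto intro!: qpi_unit_lowering_coeff\<close>)

end

section \<open>The operators $T$ and $T'$\<close>

context integrable_module
begin

definition T_term :: "int \<Rightarrow> nat \<Rightarrow> 'v \<Rightarrow> 'v" where
  "T_term k d v = scal ((- qv) ^ d) (divpow scal E (nat (k + int d)) (divpow scal F d v))"

definition T'_term :: "int \<Rightarrow> nat \<Rightarrow> 'v \<Rightarrow> 'v" where
  "T'_term k d v = scal (qinv (- qv) ^ d) (divpow_bar scal F (nat (k + int d)) (divpow_bar scal E d v))"

text \<open>\<open>T_weight k\<close> is $T$ on $1_{-k}V$ and \<open>T'_weight k\<close> is $T^{-1}$ on $1_k V$.\<close>

definition T_weight :: "int \<Rightarrow> 'v \<Rightarrow> 'v" where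
  "T_weight k v = fsum (\<lambda>d. T_term k d v) {d. int d \<ge> max 0 (- k)}"

definition T'_weight :: "int \<Rightarrow> 'v \<Rightarrow> 'v" where
  "T'_weight k v = fsum (\<lambda>d. T'_term k d v) {d. int d \<ge> max 0 (- k)}"

lemma qlinear_divpow: "qlinear scal X \<Longrightarrow> qlinear scal (divpow scal X d)"
  using qlinear_funpow[of scal X d]
  by (simp add: qlinear_def divpow_def scale_right_distrib mult.commute)

lemma qlinear_divpow_bar: "qlinear scal X \<Longrightarrow> qlinear scal (divpow_bar scal X d)"
  using qlinear_funpow[of scal X d]
  by (simp add: qlinear_def divpow_bar_def scale_right_distrib mult.commute)

lemma qlinear_T_term: "qlinear scal (T_term k d)"
  using qlinear_divpow[OF qlinear_E] qlinear_divpow[OF qlinear_F]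
  by (simp add: qlinear_def T_term_def scale_right_distrib mult.commute)

lemma qlinear_T'_term: "qlinear scal (T'_term k d)"
  using qlinear_divpow_bar[OF qlinear_E] qlinear_divpow_bar[OF qlinear_F]
  by (simp add: qlinear_def T'_term_def scale_right_distrib mult.commute)

lemma T_term_vanish: "(F ^^ N) v = 0 \<Longrightarrow> N \<le> d \<Longrightarrow> T_term k d v = 0"
  unfolding T_term_def divpow_def
  by (simp add: qlinear_funpow_vanish_mono[OF qlinear_F] qlinear_0[OF qlinear_E_power])

lemma T'_term_vanish: "(E ^^ N) v = 0 \<Longrightarrow> N \<le> d \<Longrightarrow> T'_term k d v = 0"
  unfolding T'_term_def divpow_bar_def
  by (simp add: qlinear_funpow_vanish_mono[OF qlinear_E] qlinear_0[OF qlinear_F_power])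

lemma finite_T_term_support:
  "(F ^^ N) v = 0 \<Longrightarrow> finite {d\<in>{d. int d \<ge> max 0 (- k)}. T_term k d v \<noteq> 0}"
  by (rule finite_fsum_support[of "{..<N}"]) (auto intro: T_term_vanish)

lemma finite_T'_term_support:
  "(E ^^ N) v = 0 \<Longrightarrow> finite {d\<in>{d. int d \<ge> max 0 (- k)}. T'_term k d v \<noteq> 0}"
  by (rule finite_fsum_support[of "{..<N}"]) (auto intro: T'_term_vanish)

lemma T_weight_eq_sum:
  "(F ^^ N) v = 0 \<Longrightarrow> T_weight k v = (\<Sum>d\<in>{d. int d \<ge> max 0 (- k) \<and> d < N}. T_term k d v)"
  unfolding T_weight_def by (rule fsum_eq_sum) (auto intro: T_term_vanish)

lemma T'_weight_eq_sum:
  "(E ^^ N) v = 0 \<Longrightarrow> T'_weight k v = (\<Sum>d\<in>{d. int d \<ge> max 0 (- k) \<and> d < N}. T'_term k d v)"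
  unfolding T'_weight_def by (rule fsum_eq_sum) (auto intro: T'_term_vanish)

lemma common_vanishing_power:
  assumes "v \<in> W a" and "w \<in> W b"
  shows "\<exists>N. (E ^^ N) v = 0 \<and> (E ^^ N) w = 0 \<and> (F ^^ N) v = 0 \<and> (F ^^ N) w = 0"
proof -
  obtain n n' where "\<forall>m\<ge>n. (E ^^ m) v = 0 \<and> (F ^^ m) v = 0" "\<forall>m\<ge>n'. (E ^^ m) w = 0 \<and> (F ^^ m) w = 0"
    using locally_nilpotent[OF assms(1)] locally_nilpotent[OF assms(2)] by blast
  then show ?thesis
    by (metis max.cobounded1 max.cobounded2)
qed

lemma T_weight_add:
  assumes "v \<in> W a" and "w \<in> W b"
  shows "T_weight k (v + w) = T_weight k v + T_weight k w"
proof -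
  obtain N where "(F ^^ N) v = 0" "(F ^^ N) w = 0"
    using common_vanishing_power[OF assms] by blast
  moreover from this have "(F ^^ N) (v + w) = 0"
    by (simp add: qlinear_add[OF qlinear_F_power])
  ultimately show ?thesis
    by (simp add: T_weight_eq_sum qlinear_add[OF qlinear_T_term] sum.distrib)
qed

lemma T'_weight_add:
  assumes "v \<in> W a" and "w \<in> W b"
  shows "T'_weight k (v + w) = T'_weight k v + T'_weight k w"
proof -
  obtain N where "(E ^^ N) v = 0" "(E ^^ N) w = 0"
    using common_vanishing_power[OF assms] by blast
  moreover from this have "(E ^^ N) (v + w) = 0"
    by (simp add: qlinear_add[OF qlinear_E_power])
  ultimately show ?thesis
    by (simp add: T'_weight_eq_sum qlinear_add[OF qlinear_T'_term] sum.distrib)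
qed

lemma T_weight_scal:
  assumes "v \<in> W a"
  shows "T_weight k (scal c v) = scal c (T_weight k v)"
proof -
  obtain N where "(F ^^ N) v = 0"
    using F_power_vanish[OF assms] by blast
  moreover from this have "(F ^^ N) (scal c v) = 0"
    by (simp add: qlinear_scal[OF qlinear_F_power])
  ultimately show ?thesis
    by (simp add: T_weight_eq_sum qlinear_scal[OF qlinear_T_term] scale_sum_right)
qed

lemma T'_weight_scal:
  assumes "v \<in> W a"
  shows "T'_weight k (scal c v) = scal c (T'_weight k v)"
proof -
  obtain N where "(E ^^ N) v = 0"
    using E_power_vanish[OF assms] by blast
  moreover from this have "(E ^^ N) (scal c v) = 0"
    by (simp add: qlinear_scal[OF qlinear_E_power])
  ultimately show ?thesis
    by (simp add: T'_weight_eq_sum qlinear_scal[OF qlinear_T'_term] scale_sum_right)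
qed

lemma divpow_F_W: "v \<in> W \<mu> \<Longrightarrow> divpow scal F d v \<in> W (\<mu> - 2 * int d)"
  by (simp add: divpow_def W_scal F_power_W)
lemma divpow_E_W: "v \<in> W \<mu> \<Longrightarrow> divpow scal E d v \<in> W (\<mu> + 2 * int d)"
  by (simp add: divpow_def W_scal E_power_W)
lemma divpow_bar_F_W: "v \<in> W \<mu> \<Longrightarrow> divpow_bar scal F d v \<in> W (\<mu> - 2 * int d)"
  by (simp add: divpow_bar_def W_scal F_power_W)
lemma divpow_bar_E_W: "v \<in> W \<mu> \<Longrightarrow> divpow_bar scal E d v \<in> W (\<mu> + 2 * int d)"
  by (simp add: divpow_bar_def W_scal E_power_W)

lemma T_term_W:
  assumes "v \<in> W (- k)" and "int d \<ge> - k"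
  shows "T_term k d v \<in> W k"
proof -
  have "divpow scal E (nat (k + int d)) (divpow scal F d v)
      \<in> W (- k - 2 * int d + 2 * int (nat (k + int d)))"
    by (rule divpow_E_W[OF divpow_F_W[OF assms(1)]])
  then show ?thesis
    using assms(2) by (simp add: T_term_def W_scal)
qed

lemma T'_term_W:
  assumes "v \<in> W k" and "int d \<ge> - k"
  shows "T'_term k d v \<in> W (- k)"
proof -
  have "divpow_bar scal F (nat (k + int d)) (divpow_bar scal E d v)
      \<in> W (k + 2 * int d - 2 * int (nat (k + int d)))"
    by (rule divpow_bar_F_W[OF divpow_bar_E_W[OF assms(1)]])
  then show ?thesis
    using assms(2) by (simp add: T'_term_def W_scal)
qed

lemma T_weight_W: "v \<in> W (- k) \<Longrightarrow> T_weight k v \<in> W k"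
  using F_power_vanish[of v "- k"] by (auto simp: T_weight_eq_sum intro!: W_sum T_term_W)

lemma T'_weight_W: "v \<in> W k \<Longrightarrow> T'_weight k v \<in> W (- k)"
  using E_power_vanish[of v k] by (auto simp: T'_weight_eq_sum intro!: W_sum T'_term_W)

definition weightwise :: "(int \<Rightarrow> 'v \<Rightarrow> 'v) \<Rightarrow> 'v \<Rightarrow> 'v" where
  "weightwise G v = (\<Sum>\<mu>\<in>{\<mu>. P \<mu> v \<noteq> 0}. G \<mu> (P \<mu> v))"

lemma weightwise_eq_sum:
  assumes "\<And>\<mu>. G \<mu> 0 = 0" and "finite A" and "{\<mu>. P \<mu> v \<noteq> 0} \<subseteq> A"
  shows "weightwise G v = (\<Sum>\<mu>\<in>A. G \<mu> (P \<mu> v))"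
  unfolding weightwise_def by (rule sum.mono_neutral_left) (use assms in auto)

lemma weightwise_W:
  assumes "\<And>\<mu>. G \<mu> 0 = 0" and "v \<in> W \<mu>"
  shows "weightwise G v = G \<mu> v"
proof -
  have "{\<mu>'. P \<mu>' v \<noteq> 0} \<subseteq> {\<mu>}"
    using P_other_weight[OF assms(2)] by blast
  then have "weightwise G v = G \<mu> (P \<mu> v)"
    using weightwise_eq_sum[where G = G, OF assms(1), of "{\<mu>}" v] by simp
  then show ?thesis
    using assms(2) by (simp add: mem_W_iff)
qed

lemma qlinear_weightwise:
  assumes add: "\<And>\<mu> x y. x \<in> W \<mu> \<Longrightarrow> y \<in> W \<mu> \<Longrightarrow> G \<mu> (x + y) = G \<mu> x + G \<mu> y"
    and scal: "\<And>\<mu> c x. x \<in> W \<mu> \<Longrightarrow> G \<mu> (scal c x) = scal c (G \<mu> x)"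
  shows "qlinear scal (weightwise G)"
  unfolding qlinear_def
proof (intro conjI allI)
  have G0: "G \<mu> 0 = 0" for \<mu>
    using add[OF W_0 W_0, of \<mu>] by simp
  fix x y c
  let ?A = "{\<mu>. P \<mu> x \<noteq> 0} \<union> {\<mu>. P \<mu> y \<noteq> 0} \<union> {\<mu>. P \<mu> (x + y) \<noteq> 0} \<union> {\<mu>. P \<mu> (scal c x) \<noteq> 0}"
  have A: "finite ?A"
    using weight_decomposition(1) by blast
  have sub: "{\<mu>. P \<mu> x \<noteq> 0} \<subseteq> ?A" "{\<mu>. P \<mu> y \<noteq> 0} \<subseteq> ?A"
    "{\<mu>. P \<mu> (x + y) \<noteq> 0} \<subseteq> ?A" "{\<mu>. P \<mu> (scal c x) \<noteq> 0} \<subseteq> ?A"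
    by blast+
  have "weightwise G (x + y) = (\<Sum>\<mu>\<in>?A. G \<mu> (P \<mu> x) + G \<mu> (P \<mu> y))"
    using weightwise_eq_sum[where G = G, OF G0 A sub(3)]
    by (simp add: qlinear_add[OF qlinear_P] add[OF rangeI rangeI])
  also have "\<dots> = weightwise G x + weightwise G y"
    using weightwise_eq_sum[where G = G, OF G0 A sub(1)] weightwise_eq_sum[where G = G, OF G0 A sub(2)]
    by (simp add: sum.distrib)
  finally show "weightwise G (x + y) = weightwise G x + weightwise G y" .
  have "weightwise G (scal c x) = (\<Sum>\<mu>\<in>?A. scal c (G \<mu> (P \<mu> x)))"
    using weightwise_eq_sum[where G = G, OF G0 A sub(4)]
    by (simp add: qlinear_scal[OF qlinear_P] scal[OF rangeI])
  also have "\<dots> = scal c (weightwise G x)"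
    using weightwise_eq_sum[where G = G, OF G0 A sub(1)] by (simp add: scale_sum_right)
  finally show "weightwise G (scal c x) = scal c (weightwise G x)" .
qed

definition T_op :: "'v \<Rightarrow> 'v" where
  "T_op = weightwise (\<lambda>\<mu>. T_weight (- \<mu>))"

definition T'_op :: "'v \<Rightarrow> 'v" where
  "T'_op = weightwise T'_weight"

lemma T_weight_0: "T_weight k 0 = 0"
  using T_weight_eq_sum[of 0 0 k] by simp

lemma T'_weight_0: "T'_weight k 0 = 0"
  using T'_weight_eq_sum[of 0 0 k] by simp

lemma T_op_W: "v \<in> W \<mu> \<Longrightarrow> T_op v = T_weight (- \<mu>) v"
  unfolding T_op_def by (rule weightwise_W) (simp_all add: T_weight_0)

lemma T'_op_W: "v \<in> W \<mu> \<Longrightarrow> T'_op v = T'_weight \<mu> v"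
  unfolding T'_op_def by (rule weightwise_W) (simp_all add: T'_weight_0)

lemma qlinear_T_op: "qlinear scal T_op"
  unfolding T_op_def by (rule qlinear_weightwise) (simp_all add: T_weight_add T_weight_scal)

lemma qlinear_T'_op: "qlinear scal T'_op"
  unfolding T'_op_def by (rule qlinear_weightwise) (simp_all add: T'_weight_add T'_weight_scal)

end

section \<open>$T'$ is inverse to $T$\<close>

context integrable_module
begin

lemma funpow_string:
  assumes X: "qlinear scal X"
    and step: "\<And>m. X ((Y ^^ Suc m) x) = scal (c (Suc m)) ((Y ^^ m) x)"
    and "a \<le> N"
  shows "(X ^^ a) ((Y ^^ N) x) = scal (\<Prod>i\<in>{N - a<..N}. c i) ((Y ^^ (N - a)) x)"
  using \<open>a \<le> N\<close>
proof (induct a)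
  case (Suc a)
  then have "N - a = Suc (N - Suc a)" "{N - Suc a<..N} = insert (N - a) {N - a<..N}"
    by auto
  moreover have "(X ^^ Suc a) ((Y ^^ N) x) = X (scal (\<Prod>i\<in>{N - a<..N}. c i) ((Y ^^ (N - a)) x))"
    using Suc by simp
  ultimately show ?case
    by (simp add: qlinear_scal[OF X] step mult.commute)
qed simp

lemma E_power_F_power_highest:
  assumes "x \<in> W \<mu>" and "E x = 0" and "a \<le> N"
  shows "(E ^^ a) ((F ^^ N) x) = scal (\<Prod>i\<in>{N - a<..N}. raising_coeff \<mu> i) ((F ^^ (N - a)) x)"
  by (rule funpow_string[OF qlinear_E E_F_power_highest[OF assms(1,2)] assms(3)])

lemma F_power_E_power_lowest:
  assumes "y \<in> W \<mu>" and "F y = 0" and "a \<le> N"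
  shows "(F ^^ a) ((E ^^ N) y) = scal (\<Prod>i\<in>{N - a<..N}. lowering_coeff \<mu> i) ((E ^^ (N - a)) y)"
  by (rule funpow_string[OF qlinear_F F_E_power_lowest[OF assms(1,2)] assms(3)])

lemma E_power_F_power_highest_vanish:
  assumes x: "x \<in> W \<mu>" and Ex: "E x = 0" and "N < a"
  shows "(E ^^ a) ((F ^^ N) x) = 0"
proof -
  define r where "r = a - N - 1"
  have a: "a = Suc r + N"
    using \<open>N < a\<close> by (simp add: r_def)
  have "(E ^^ a) ((F ^^ N) x) = (E ^^ r) (E ((E ^^ N) ((F ^^ N) x)))"
    by (simp only: a funpow_add funpow_Suc_right o_apply)
  also have "\<dots> = 0"
    using E_power_F_power_highest[OF x Ex, of N N]
    by (simp add: qlinear_scal[OF qlinear_E] Ex qlinear_0[OF qlinear_E_power])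
  finally show ?thesis .
qed

lemma F_power_eq_divpow: "(F ^^ m) x = scal (qfact m) (divpow scal F m x)"
  by (simp add: divpow_def qinv_right_inverse[OF qpi_unit_qfact])

lemma T_weight_divpow_F_highest:
  assumes x: "x \<in> W (int (j + m))" and Ex: "E x = 0"
  shows "T_weight (int j - int m) (divpow scal F j x) = scal (T_string_coeff j m) (divpow scal F m x)"
proof -
  let ?k = "int j - int m" and ?v = "divpow scal F j x"
  have "(F ^^ Suc m) ?v = scal (qinv (qfact j)) ((F ^^ (Suc m + j)) x)"
    by (simp only: divpow_def qlinear_scal[OF qlinear_F_power] funpow_add o_apply)
  then have vanish: "(F ^^ Suc m) ?v = 0"
    using highest_weight_string_vanishes[OF x Ex] by (simp add: add.commute)
  have "T_term ?k d ?v = scal ((- qv) ^ d * qinv (qfact (j + d - m)) * qinv (qfact d) * qinv (qfact j)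
      * (\<Prod>i\<in>{m<..j + d}. raising_coeff (int (j + m)) i) * qfact m) (divpow scal F m x)"
    if d: "m \<le> j + d" "d \<le> m" for d
  proof -
    have "nat (?k + int d) = j + d - m"
      using d by simp
    moreover have "divpow scal F d ?v = scal (qinv (qfact d) * qinv (qfact j)) ((F ^^ (d + j)) x)"
      by (simp add: divpow_def qlinear_scal[OF qlinear_F_power] funpow_add)
    moreover have "(E ^^ (j + d - m)) ((F ^^ (d + j)) x)
        = scal (\<Prod>i\<in>{m<..j + d}. raising_coeff (int (j + m)) i) ((F ^^ m) x)"
      using E_power_F_power_highest[OF x Ex, of "j + d - m" "d + j"] d by (simp add: add.commute)
    ultimately show ?thesis
      unfolding T_term_def divpow_def[of _ E]
      by (simp add: qlinear_scal[OF qlinear_E_power] F_power_eq_divpow[of m] mult.assoc)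
  qed
  moreover have "{d. int d \<ge> max 0 (- ?k) \<and> d < Suc m} = {d. m \<le> j + d \<and> d \<le> m}"
    by auto
  ultimately show ?thesis
    by (simp add: T_weight_eq_sum[OF vanish] T_string_coeff_def scale_sum_left)
qed

lemma T'_weight_divpow_F_highest:
  assumes x: "x \<in> W (int (j + m))" and Ex: "E x = 0"
  shows "T'_weight (int j - int m) (divpow scal F m x) = scal (T'_string_coeff j m) (divpow scal F j x)"
proof -
  let ?k = "int j - int m" and ?w = "divpow scal F m x"
  have vanish: "(E ^^ Suc m) ?w = 0"
    unfolding divpow_def qlinear_scal[OF qlinear_E_power]
      E_power_F_power_highest_vanish[OF x Ex, of m "Suc m", OF lessI] by simp
  have "T'_term ?k d ?w = scal (qinv (- qv) ^ d * qinv (qbar (qfact (j + d - m))) * qinv (qbar (qfact d))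
      * qinv (qfact m) * (\<Prod>i\<in>{m - d<..m}. raising_coeff (int (j + m)) i) * qfact j) (divpow scal F j x)"
    if d: "m \<le> j + d" "d \<le> m" for d
  proof -
    have "nat (?k + int d) = j + d - m"
      using d by simp
    moreover have "(E ^^ d) ((F ^^ m) x) = scal (\<Prod>i\<in>{m - d<..m}. raising_coeff (int (j + m)) i) ((F ^^ (m - d)) x)"
      using E_power_F_power_highest[OF x Ex, of d m] d by simp
    moreover have "(F ^^ (j + d - m)) ((F ^^ (m - d)) x) = (F ^^ j) x"
      using d by (simp flip: funpow_add[unfolded comp_def, THEN fun_cong])
    ultimately show ?thesis
      unfolding T'_term_def divpow_bar_def divpow_def
      by (simp add: qlinear_scal[OF qlinear_E_power] qlinear_scal[OF qlinear_F_power]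
          F_power_eq_divpow[of j] qinv_left_inverse[OF qpi_unit_qfact] mult.assoc)
  qed
  moreover have "{d. int d \<ge> max 0 (- ?k) \<and> d < Suc m} = {d. m \<le> j + d \<and> d \<le> m}"
    by auto
  ultimately show ?thesis
    by (simp add: T'_weight_eq_sum[OF vanish] T'_string_coeff_def scale_sum_left)
qed


definition T_inverted :: "'v set" where
  "T_inverted = {v. T'_op (T_op v) = v \<and> T_op (T'_op v) = v}"

lemma T_inverted_add: "x \<in> T_inverted \<Longrightarrow> y \<in> T_inverted \<Longrightarrow> x + y \<in> T_inverted"
  by (simp add: T_inverted_def qlinear_add[OF qlinear_T_op] qlinear_add[OF qlinear_T'_op])
lemma T_inverted_scal: "x \<in> T_inverted \<Longrightarrow> scal c x \<in> T_inverted"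
  by (simp add: T_inverted_def qlinear_scal[OF qlinear_T_op] qlinear_scal[OF qlinear_T'_op])
lemma T_inverted_0: "0 \<in> T_inverted"
  by (simp add: T_inverted_def qlinear_0[OF qlinear_T_op] qlinear_0[OF qlinear_T'_op])
lemma T_inverted_sum: "(\<And>a. a \<in> A \<Longrightarrow> g a \<in> T_inverted) \<Longrightarrow> sum g A \<in> T_inverted"
  by (induct A rule: infinite_finite_induct) (simp_all add: T_inverted_0 T_inverted_add)

text \<open>On a string $F^{(j)} x$, $F^{(m)} x$ ($j + m$ the weight of $x$) the operators act by
  mutually inverse scalars, swapping the two ends.\<close>

lemma divpow_F_highest_T_inverted:
  assumes x: "x \<in> W (int n)" and Ex: "E x = 0"
  shows "divpow scal F j x \<in> T_inverted"
proof (cases "j \<le> n")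
  case False
  then have "(F ^^ j) x = 0"
    using qlinear_funpow_vanish_mono[OF qlinear_F highest_weight_string_vanishes[OF x Ex]] by simp
  then show ?thesis
    by (simp add: divpow_def T_inverted_0)
next
  case True
  define m where "m = n - j"
  have x_jm: "x \<in> W (int (j + m))" and x_mj: "x \<in> W (int (m + j))"
    using x True by (simp_all add: m_def)
  have "divpow scal F j x \<in> W (- (int j - int m))" "divpow scal F m x \<in> W (int j - int m)"
    using divpow_F_W[OF x_jm, of j] divpow_F_W[OF x_jm, of m] by simp_all
  then have "T_op (divpow scal F j x) = scal (T_string_coeff j m) (divpow scal F m x)"
    "T'_op (divpow scal F m x) = scal (T'_string_coeff j m) (divpow scal F j x)"
    "T'_op (divpow scal F j x) = scal (T'_string_coeff m j) (divpow scal F m x)"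
    "T_op (divpow scal F m x) = scal (T_string_coeff m j) (divpow scal F j x)"
    using T_weight_divpow_F_highest[OF x_jm Ex] T'_weight_divpow_F_highest[OF x_jm Ex]
      T_weight_divpow_F_highest[OF x_mj Ex] T'_weight_divpow_F_highest[OF x_mj Ex]
    by (simp_all add: T_op_W T'_op_W)
  then show ?thesis
    unfolding T_inverted_def
    by (simp add: qlinear_scal[OF qlinear_T_op] qlinear_scal[OF qlinear_T'_op] T_string_coeff_inverse
        mult.commute[of "T'_string_coeff _ _"])
qed

lemma F_power_highest_T_inverted:
  assumes x: "x \<in> W \<mu>" and Ex: "E x = 0"
  shows "(F ^^ j) x \<in> T_inverted"
proof (cases "\<mu> < 0")
  case True
  then show ?thesis
    using highest_weight_negative[OF x Ex] by (simp add: qlinear_0[OF qlinear_F_power] T_inverted_0)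
next
  case False
  then obtain n where "\<mu> = int n"
    by (metis nonneg_int_cases not_less)
  then show ?thesis
    using divpow_F_highest_T_inverted[of x n j] x Ex by (simp add: F_power_eq_divpow T_inverted_scal)
qed

text \<open>A string through a lowest weight vector is also a string through a highest weight vector.\<close>

lemma E_power_lowest_T_inverted:
  assumes y: "y \<in> W \<mu>" and Fy: "F y = 0"
  shows "(E ^^ j) y \<in> T_inverted"
proof (cases "\<mu> > 0")
  case True
  then show ?thesis
    using lowest_weight_positive[OF y Fy] by (simp add: qlinear_0[OF qlinear_E_power] T_inverted_0)
next
  case False
  then obtain n where \<mu>: "\<mu> = - int n"
    by (metis nonpos_int_cases not_less)
  then have top: "(E ^^ Suc n) y = 0"
    using lowest_weight_string_vanishes[of y n] y Fy by simp
  show ?thesis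
  proof (cases "j \<le> n")
    case False
    then show ?thesis
      using qlinear_funpow_vanish_mono[OF qlinear_E top] by (simp add: T_inverted_0)
  next
    case True
    let ?x = "(E ^^ n) y" and ?c = "\<Prod>i\<in>{j<..n}. lowering_coeff \<mu> i"
    have "?x \<in> W (int n)"
      using E_power_W[OF y, of n] \<mu> by simp
    moreover have "E ?x = 0"
      using top by simp
    moreover have "qpi_unit ?c"
      by (rule qpi_unit_prod) (use \<mu> in \<open>auto intro!: qpi_unit_lowering_coeff\<close>)
    then have "(E ^^ j) y = scal (qinv ?c) ((F ^^ (n - j)) ?x)"
      using F_power_E_power_lowest[OF y Fy, of "n - j" n] True qinv_left_inverse by simp
    ultimately show ?thesis
      using F_power_highest_T_inverted T_inverted_scal by simp
  qed
qed

lemma W_T_inverted: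
  assumes v: "v \<in> W l"
  shows "v \<in> T_inverted"
proof (cases "l \<ge> -1")
  case True
  then obtain N xs where v: "v = (\<Sum>j<N. (F ^^ j) (xs j))"
    and xs: "\<forall>j<N. xs j \<in> W (l + int j * 2) \<and> E (xs j) = 0"
    using highest_weight_string_decomposition[OF _ v] by blast
  show ?thesis
    unfolding v by (rule T_inverted_sum) (use xs F_power_highest_T_inverted in blast)
next
  case False
  then obtain N xs where v: "v = (\<Sum>j<N. (E ^^ j) (xs j))"
    and xs: "\<forall>j<N. xs j \<in> W (l + int j * (-2)) \<and> F (xs j) = 0"
    using lowest_weight_string_decomposition[OF _ v] by auto
  show ?thesis
    unfolding v by (rule T_inverted_sum) (use xs E_power_lowest_T_inverted in blast)
qed

lemma T'_T_op: "T'_op (T_op v) = v" and T_T'_op: "T_op (T'_op v) = v"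
proof -
  have "(\<Sum>k\<in>{k. P k v \<noteq> 0}. P k v) \<in> T_inverted"
    by (rule T_inverted_sum) (rule W_T_inverted[OF rangeI])
  then have "v \<in> T_inverted"
    using weight_decomposition(2)[of v] by simp
  then show "T'_op (T_op v) = v" "T_op (T'_op v) = v"
    by (simp_all add: T_inverted_def)
qed

lemma bij_T_op: "bij T_op"
  by (metis T'_T_op T_T'_op bij_betw_byWitness subset_UNIV)

lemma inv_T_op: "inv T_op = T'_op"
  by (metis T'_T_op T_T'_op inv_equality)

lemma T_op_image: "T_op ` W (- k) = W k"
proof
  show "T_op ` W (- k) \<subseteq> W k"
    using T_op_W T_weight_W by auto
  show "W k \<subseteq> T_op ` W (- k)"
  proof
    fix w
    assume w: "w \<in> W k"
    then have "T'_op w \<in> W (- k)"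
      using T'_op_W T'_weight_W by simp
    then show "w \<in> T_op ` W (- k)"
      using T_T'_op[of w] by (metis imageI)
  qed
qed

lemma T_op_formula:
  assumes v: "v \<in> W (- k)"
  shows "finite {d. int d \<ge> max 0 (- k) \<and>
      scal ((- qv) ^ d) (divpow scal E (nat (k + int d)) (divpow scal F d v)) \<noteq> 0}"
    and "T_op v = fsum (\<lambda>d. scal ((- qv) ^ d) (divpow scal E (nat (k + int d)) (divpow scal F d v)))
      {d. int d \<ge> max 0 (- k)}"
proof -
  obtain N where "(F ^^ N) v = 0"
    using F_power_vanish[OF v] by blast
  from finite_T_term_support[OF this, of k] show "finite {d. int d \<ge> max 0 (- k) \<and>
      scal ((- qv) ^ d) (divpow scal E (nat (k + int d)) (divpow scal F d v)) \<noteq> 0}"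
    by (simp add: T_term_def)
  show "T_op v = fsum (\<lambda>d. scal ((- qv) ^ d) (divpow scal E (nat (k + int d)) (divpow scal F d v)))
      {d. int d \<ge> max 0 (- k)}"
    using T_op_W[OF v] by (simp add: T_weight_def T_term_def)
qed

lemma inv_T_op_formula:
  assumes v: "v \<in> W k"
  shows "finite {d. int d \<ge> max 0 (- k) \<and>
      scal (qinv (- qv) ^ d) (divpow_bar scal F (nat (k + int d)) (divpow_bar scal E d v)) \<noteq> 0}"
    and "inv T_op v = fsum (\<lambda>d. scal (qinv (- qv) ^ d) (divpow_bar scal F (nat (k + int d)) (divpow_bar scal E d v)))
      {d. int d \<ge> max 0 (- k)}"
proof -
  obtain N where "(E ^^ N) v = 0"
    using E_power_vanish[OF v] by blast
  from finite_T'_term_support[OF this, of k] show "finite {d. int d \<ge> max 0 (- k) \<and>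
      scal (qinv (- qv) ^ d) (divpow_bar scal F (nat (k + int d)) (divpow_bar scal E d v)) \<noteq> 0}"
    by (simp add: T'_term_def)
  show "inv T_op v = fsum (\<lambda>d. scal (qinv (- qv) ^ d) (divpow_bar scal F (nat (k + int d)) (divpow_bar scal E d v)))
      {d. int d \<ge> max 0 (- k)}"
    using T'_op_W[OF v] by (simp add: inv_T_op T'_weight_def T'_term_def)
qed

end

theorem mainTheorem4:
  fixes scal :: "qpi \<Rightarrow> 'v::ab_group_add \<Rightarrow> 'v"
    and P :: "int \<Rightarrow> 'v \<Rightarrow> 'v" and E F :: "'v \<Rightarrow> 'v"
  assumes "integrable scal P E F"
  shows "\<exists>T. qlinear scal T \<and> bij T \<and>
     (\<forall>k. T ` range (P (- k)) = range (P k)) \<and>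
     (\<forall>k. \<forall>v\<in>range (P (- k)).
        finite {d. int d \<ge> max 0 (- k) \<and> scal ((- qv) ^ d) (divpow scal E (nat (k + int d)) (divpow scal F d v)) \<noteq> 0} \<and>
        T v = fsum (\<lambda>d. scal ((- qv) ^ d) (divpow scal E (nat (k + int d)) (divpow scal F d v)))
                   {d. int d \<ge> max 0 (- k)}) \<and>
     (\<forall>k. \<forall>v\<in>range (P k).
        finite {d. int d \<ge> max 0 (- k) \<and> scal (qinv (- qv) ^ d) (divpow_bar scal F (nat (k + int d)) (divpow_bar scal E d v)) \<noteq> 0} \<and>
        inv T v = fsum (\<lambda>d. scal (qinv (- qv) ^ d) (divpow_bar scal F (nat (k + int d)) (divpow_bar scal E d v)))
                   {d. int d \<ge> max 0 (- k)})"
proof -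
  interpret integrable_module scal P E F
    using assms by (rule integrable_module.intro)
  show ?thesis
    by (intro exI[of _ T_op] conjI allI ballI qlinear_T_op bij_T_op T_op_image
        T_op_formula inv_T_op_formula)
qed

end
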